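(* In the setting described in the context, there exist $\delta\in(0,\tfrac{\sqrt2}{2})$ with $\lambda_Ka_K-\lambda_1a_1\delta>0$ and $\bar\eta>0$ satisfying $g(\mathbf Q)-g(\mathbf X)\ge\bar\eta\,d_F^2(\mathbf X,\mathbf Q)$ for all $\mathbf X\in\mathrm{St}(d,K)$, such that for every $\alpha\in(0,\lambda_Ka_K-\lambda_1a_1\delta)$ there exists $\gamma\in(0,1)$ with the following property. Set $\delta_1=\delta^2\bar\eta$, $c=\lambda_Ka_K-\lambda_1a_1\delta-\alpha>0$, and let $L_g>0$ be a Lipschitz constant of $g$ on $\mathrm{St}(d,K)$ in the Frobenius norm. Suppose (a) $\mathbf X^0\in\mathrm{St}(d,K)$ satisfies $g(\mathbf Q)-g(\mathbf X^0)\le\delta_1$, and (b) $\sum_{k=1}^K\|\Delta_k\|\le\frac{2c(1-\gamma)\delta_1}{2L_g+(1-\gamma)\delta_1}$. Then every sequence $\{\mathbf X^t\}_{t\ge0}$ generated by $\mathbf X^{t+1}\in\mathcal P_{\mathrm{St}}\big(\alpha\mathbf X^t+[\mathbf M_1\mathbf x_1^t,\dots,\mathbf M_K\mathbf x_K^t]\big)$ satisfies $d_F(\mathbf X^t,\mathbf Q)\le\delta$ for all $t\ge0$.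
   Context: $d>K\ge1$, $\mathrm{St}(d,K)=\{\mathbf X\in\mathbb R^{d\times K}:\mathbf X^\top\mathbf X=\mathbf I_K\}$, $\mathbf Q\in\mathrm{St}(d,K)$, $\lambda_1>\dots>\lambda_K>0$, $\boldsymbol\Theta=\mathrm{diag}(\sqrt{\lambda_1},\dots,\sqrt{\lambda_K})$. Integers $L\ge1$, $n_1,\dots,n_L\ge1$, $n=\sum_ln_l$; $v_1>\dots>v_L>0$; data $\mathbf y_{l,i}=\mathbf Q\boldsymbol\Theta\mathbf z_{l,i}+\boldsymbol\eta_{l,i}\in\mathbb R^d$ ($l\in[L],i\in[n_l]$) with $\mathbf z_{l,i}$ i.i.d. $\mathcal N(\mathbf0,\mathbf I_K)$ independent of $\boldsymbol\eta_{l,i}$ i.i.d. $\mathcal N(\mathbf 0,v_l\mathbf I_d)$. $w_{l,k}=\lambda_k/(\lambda_k+v_l)$, $a_k=\sum_l w_{l,k}\frac{n_l}{n}\frac1{v_l}$ (so $a_1>\dots>a_K>0$), $\gamma_k=\sum_lw_{l,k}\frac{n_l}{n}$, $\mathbf M_k=\frac1n\sum_{l}\sum_{i}\frac{w_{l,k}}{v_l}\mathbf y_{l,i}\mathbf y_{l,i}^\top-\gamma_k\mathbf I_d$, $\Delta_k=\mathbf M_k-a_k\mathbf Q\boldsymbol\Theta^2\mathbf Q^\top$; $\|\Delta_k\|$ is the operator norm. $g(\mathbf X)=\mathrm{tr}(\mathbf X^\top\mathbf Q\boldsymbol\Theta^2\mathbf Q^\top\mathbf X\,\mathrm{diag}(a_1,\dots,a_K))$,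 $d_F(\mathbf X,\mathbf Q)=\min_{\mathbf q\in\{\pm1\}^K}\|\mathbf X-\mathbf Q\,\mathrm{diag}(\mathbf q)\|_F$. $\mathbf x_k^t$ is the $k$-th column of $\mathbf X^t$; $\mathcal P_{\mathrm{St}}(\mathbf Y)$ is the set of Frobenius-nearest points of $\mathrm{St}(d,K)$ to $\mathbf Y$. *)

theory Defs
  imports Complex_Main "Jordan_Normal_Form.Matrix"
begin

text \<open>Matrices are JNF matrices ('real mat'); all indices are 0-based:
  the paper's index k in [K] is k-1 here, l in [L] is l-1, i in [n_l] is i-1.\<close>

definition vnorm :: "real vec \<Rightarrow> real" where
  "vnorm x = sqrt (\<Sum>i<dim_vec x. (x $ i)^2)"

definition fro_norm :: "real mat \<Rightarrow> real" where
  "fro_norm A = sqrt (\<Sum>i<dim_row A. \<Sum>j<dim_col A. (A $$ (i,j))^2)"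

definition op_norm :: "real mat \<Rightarrow> real" where
  "op_norm A = Sup {vnorm (A *\<^sub>v x) | x. x \<in> carrier_vec (dim_col A) \<and> vnorm x \<le> 1}"

definition mat_trace :: "real mat \<Rightarrow> real" where
  "mat_trace A = (\<Sum>i<dim_row A. A $$ (i,i))"

definition diag_of :: "nat \<Rightarrow> (nat \<Rightarrow> real) \<Rightarrow> real mat" where
  "diag_of K f = mat K K (\<lambda>(i,j). if i = j then f i else 0)"

definition stiefel :: "nat \<Rightarrow> nat \<Rightarrow> real mat set" where
  "stiefel d K = {X \<in> carrier_mat d K. X\<^sup>T * X = 1\<^sub>m K}"

definition proj_St :: "nat \<Rightarrow> nat \<Rightarrow> real mat \<Rightarrow> real mat set" where
  "proj_St d K Y = {X \<in> stiefel d K. \<forall>Z \<in> stiefel d K. fro_norm (Y - X) \<le> fro_norm (Y - Z)}"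

definition dF :: "nat \<Rightarrow> real mat \<Rightarrow> real mat \<Rightarrow> real" where
  "dF K X Q = Min {fro_norm (X - Q * diag_of K (\<lambda>k. q ! k)) | q.
                      length q = K \<and> set q \<subseteq> {-1, 1}}"

text \<open>Weights: w_{l,k}, a_k, gamma_k  (lam = lambda, v = noise variances, nl = sample sizes)\<close>
definition wgt :: "(nat \<Rightarrow> real) \<Rightarrow> (nat \<Rightarrow> real) \<Rightarrow> nat \<Rightarrow> nat \<Rightarrow> real" where
  "wgt lam v l k = lam k / (lam k + v l)"

definition ntot :: "nat \<Rightarrow> (nat \<Rightarrow> nat) \<Rightarrow> nat" where
  "ntot L nl = (\<Sum>l<L. nl l)"

definition acoef :: "nat \<Rightarrow> (nat \<Rightarrow> nat) \<Rightarrow> (nat \<Rightarrow> real) \<Rightarrow> (nat \<Rightarrow> real) \<Rightarrow> nat \<Rightarrow> real" where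
  "acoef L nl lam v k = (\<Sum>l<L. wgt lam v l k * (real (nl l) / real (ntot L nl)) * (1 / v l))"

definition gcoef :: "nat \<Rightarrow> (nat \<Rightarrow> nat) \<Rightarrow> (nat \<Rightarrow> real) \<Rightarrow> (nat \<Rightarrow> real) \<Rightarrow> nat \<Rightarrow> real" where
  "gcoef L nl lam v k = (\<Sum>l<L. wgt lam v l k * (real (nl l) / real (ntot L nl)))"

definition Mk :: "nat \<Rightarrow> nat \<Rightarrow> (nat \<Rightarrow> nat) \<Rightarrow> (nat \<Rightarrow> real) \<Rightarrow> (nat \<Rightarrow> real)
                   \<Rightarrow> (nat \<Rightarrow> nat \<Rightarrow> real vec) \<Rightarrow> nat \<Rightarrow> real mat" where
  "Mk d L nl lam v y k = mat d d (\<lambda>(p,q).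
      (1 / real (ntot L nl)) * (\<Sum>l<L. \<Sum>i<nl l. (wgt lam v l k / v l) * (y l i $ p) * (y l i $ q))
      - (if p = q then gcoef L nl lam v k else 0))"

definition sigQ :: "nat \<Rightarrow> real mat \<Rightarrow> (nat \<Rightarrow> real) \<Rightarrow> real mat" where
  "sigQ K Q lam = Q * diag_of K lam * Q\<^sup>T"

definition Deltak :: "nat \<Rightarrow> nat \<Rightarrow> nat \<Rightarrow> (nat \<Rightarrow> nat) \<Rightarrow> real mat \<Rightarrow> (nat \<Rightarrow> real) \<Rightarrow> (nat \<Rightarrow> real)
                   \<Rightarrow> (nat \<Rightarrow> nat \<Rightarrow> real vec) \<Rightarrow> nat \<Rightarrow> real mat" where
  "Deltak d K L nl Q lam v y k = Mk d L nl lam v y k - acoef L nl lam v k \<cdot>\<^sub>m sigQ K Q lam"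

definition gfun :: "nat \<Rightarrow> nat \<Rightarrow> (nat \<Rightarrow> nat) \<Rightarrow> real mat \<Rightarrow> (nat \<Rightarrow> real) \<Rightarrow> (nat \<Rightarrow> real)
                   \<Rightarrow> real mat \<Rightarrow> real" where
  "gfun K L nl Q lam v X = mat_trace (X\<^sup>T * sigQ K Q lam * X * diag_of K (acoef L nl lam v))"

definition colmap :: "nat \<Rightarrow> nat \<Rightarrow> (nat \<Rightarrow> real mat) \<Rightarrow> real mat \<Rightarrow> real mat" where
  "colmap d K M X = mat d K (\<lambda>(i,k). (M k *\<^sub>v col X k) $ i)"

end

theory Submission
  imports Defs "HOL-Analysis.Convex"
begin

text \<open>With \<open>P\<^sub>j\<^sub>k = \<langle>q\<^sub>j, x\<^sub>k\<rangle>\<^sup>2\<close> one has \<open>g(Q) - g(X) = \<Sum>\<^sub>k a\<^sub>k (\<lambda>\<^sub>k - \<Sum>\<^sub>j \<lambda>\<^sub>j P\<^sub>j\<^sub>k)\<close>, and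
  Bessel's inequality makes \<open>P\<close> doubly substochastic. Abel summation in the strictly decreasing
  sequences \<open>a\<close> and \<open>\<lambda>\<close> bounds this from below by \<open>\<mu>/2 \<Sum>\<^sub>k (1 - P\<^sub>k\<^sub>k) \<ge> \<mu>/4 d\<^sub>F(X,Q)\<^sup>2\<close>, where \<open>\<mu>\<close>
  is the least product of consecutive gaps of \<open>a\<close> and \<open>\<lambda>\<close> (both continued by \<open>0\<close>); we take
  \<open>\<eta>bar = \<mu>/8\<close>, keeping a factor \<open>2\<close> in reserve.

  The iteration is projected ascent on \<open>f(X) = \<Sum>\<^sub>k x\<^sub>k\<^sup>T M\<^sub>k x\<^sub>k\<close>. Since \<open>M\<^sub>k = a\<^sub>k Q\<Theta>\<^sup>2Q\<^sup>T + \<Delta>\<^sub>k\<close> with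
  positive semidefinite first summand, \<open>f\<close> does not decrease along the iterates as soon as
  \<open>\<Sum>\<^sub>k \<parallel>\<Delta>\<^sub>k\<parallel> \<le> \<alpha>\<close>, and \<open>|f - g| \<le> \<Sum>\<^sub>k \<parallel>\<Delta>\<^sub>k\<parallel>\<close> on the Stiefel manifold. If an iterate left
  the \<open>\<delta>\<close>-ball, quadratic growth against the Lipschitz bound would force \<open>L\<^sub>g > 2\<eta>bar \<delta>\<close>, which for
  \<open>\<gamma>\<close> close to \<open>1\<close> turns the noise hypothesis into \<open>\<Sum>\<^sub>k \<parallel>\<Delta>\<^sub>k\<parallel> \<le> min \<alpha> (\<delta>\<^sub>1/2)\<close>; but then
  \<open>g(Q) - g(X\<^sup>t) \<le> \<delta>\<^sub>1 + 2 \<Sum>\<^sub>k \<parallel>\<Delta>\<^sub>k\<parallel> \<le> 2\<eta>bar \<delta>\<^sup>2\<close> for every \<open>t\<close>, contradicting quadratic growth.\<close>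

section \<open>Gaps of decreasing sequences and doubly substochastic matrices\<close>

definition gap :: "nat \<Rightarrow> (nat \<Rightarrow> real) \<Rightarrow> nat \<Rightarrow> real" where
  "gap K f m = f m - (if Suc m < K then f (Suc m) else 0)"

definition min_gap_product :: "nat \<Rightarrow> (nat \<Rightarrow> real) \<Rightarrow> (nat \<Rightarrow> real) \<Rightarrow> real" where
  "min_gap_product K a b = Min ((\<lambda>m. gap K a m * gap K b m) ` {..<K})"

definition doubly_substochastic :: "nat \<Rightarrow> (nat \<Rightarrow> nat \<Rightarrow> real) \<Rightarrow> bool" where
  "doubly_substochastic K P \<longleftrightarrow> (\<forall>j<K. \<forall>k<K. 0 \<le> P j k)
     \<and> (\<forall>j<K. (\<Sum>k<K. P j k) \<le> 1) \<and> (\<forall>k<K. (\<Sum>j<K. P j k) \<le> 1)"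

definition block_deficit :: "(nat \<Rightarrow> nat \<Rightarrow> real) \<Rightarrow> nat \<Rightarrow> real" where
  "block_deficit P m = (\<Sum>j\<le>m. 1 - (\<Sum>k\<le>m. P j k))"

lemma gap_pos:
  assumes "\<forall>i j. i < j \<and> j < K \<longrightarrow> f j < f i" and "\<forall>k<K. 0 < f k" and "m < K"
  shows "0 < gap K f m"
  using assms unfolding gap_def by auto

lemma min_gap_product_pos:
  assumes "\<forall>i j. i < j \<and> j < K \<longrightarrow> a j < a i" and "\<forall>k<K. 0 < a k"
    and "\<forall>i j. i < j \<and> j < K \<longrightarrow> b j < b i" and "\<forall>k<K. 0 < b k" and "0 < K"
  shows "0 < min_gap_product K a b"
  unfolding min_gap_product_def using assms gap_pos[of K a] gap_pos[of K b]
  by (subst Min_gr_iff) (auto simp: lessThan_empty_iff)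

lemma min_gap_product_le: "m < K \<Longrightarrow> min_gap_product K a b \<le> gap K a m * gap K b m"
  unfolding min_gap_product_def by (intro Min_le) auto

lemma strict_antimono_imp_le:
  fixes b :: "nat \<Rightarrow> real"
  assumes "\<forall>i j. i < j \<and> j < K \<longrightarrow> b j < b i" and "i \<le> j" and "j < K"
  shows "b j \<le> b i"
  using assms(1)[rule_format, of i j] assms(2,3) by (cases "i = j") auto

lemma sum_gap_atLeastLessThan:
  assumes "k < K"
  shows "(\<Sum>m=k..<K. gap K f m) = f k"
proof -
  define e where "e m = (if m < K then f m else 0)" for m
  have "(\<Sum>m=k..<K. gap K f m) = - (\<Sum>m=k..<K. e (Suc m) - e m)"
    by (simp add: sum_negf[symmetric]) (intro sum.cong refl, simp add: gap_def e_def)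
  also have "\<dots> = f k"
    using assms by (subst sum_Suc_diff') (auto simp: e_def)
  finally show ?thesis .
qed

lemma sum_mult_eq_sum_gap_partial_sums:
  "(\<Sum>k<K. a k * f k) = (\<Sum>m<K. gap K a m * (\<Sum>k\<le>m. f k))"
proof -
  have "(\<Sum>k<K. a k * f k) = (\<Sum>k<K. \<Sum>m\<in>{m\<in>{..<K}. k \<le> m}. gap K a m * f k)"
  proof (intro sum.cong refl)
    fix k assume "k \<in> {..<K}"
    moreover have "{m\<in>{..<K}. k \<le> m} = {k..<K}" by auto
    ultimately show "a k * f k = (\<Sum>m\<in>{m\<in>{..<K}. k \<le> m}. gap K a m * f k)"
      by (simp add: sum_gap_atLeastLessThan flip: sum_distrib_right)
  qed
  also have "\<dots> = (\<Sum>m<K. \<Sum>k\<in>{k\<in>{..<K}. k \<le> m}. gap K a m * f k)"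
    by (rule sum.swap_restrict) auto
  also have "\<dots> = (\<Sum>m<K. gap K a m * (\<Sum>k\<le>m. f k))"
  proof (intro sum.cong refl)
    fix m assume "m \<in> {..<K}"
    then have "{k\<in>{..<K}. k \<le> m} = {..m}" by auto
    then show "(\<Sum>k\<in>{k\<in>{..<K}. k \<le> m}. gap K a m * f k) = gap K a m * (\<Sum>k\<le>m. f k)"
      by (simp add: sum_distrib_left)
  qed
  finally show ?thesis .
qed

lemma sum_lessThan_split_atMost:
  fixes g :: "nat \<Rightarrow> real"
  assumes "m < K"
  shows "(\<Sum>j<K. g j) = (\<Sum>j\<le>m. g j) + (\<Sum>j=Suc m..<K. g j)"
  using assms sum.atLeastLessThan_concat[of 0 "Suc m" K g]
  by (simp add: atLeast0LessThan lessThan_Suc_atMost)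

lemma row_prefix_sum_le_1:
  assumes "doubly_substochastic K P" and "j < K" and "m < K"
  shows "(\<Sum>k\<le>m. P j k) \<le> 1"
proof -
  have "(\<Sum>k\<le>m. P j k) \<le> (\<Sum>k<K. P j k)"
    using assms by (intro sum_mono2) (auto simp: doubly_substochastic_def)
  also have "\<dots> \<le> 1" using assms by (simp add: doubly_substochastic_def)
  finally show ?thesis .
qed

lemma block_deficit_nonneg:
  assumes "doubly_substochastic K P" and "m < K"
  shows "0 \<le> block_deficit P m"
  unfolding block_deficit_def
  using assms row_prefix_sum_le_1[OF assms(1)] by (intro sum_nonneg) auto

lemma tail_mass_le_block_deficit:
  assumes P: "doubly_substochastic K P" and m: "m < K"
  shows "(\<Sum>j=Suc m..<K. \<Sum>k\<le>m. P j k) \<le> block_deficit P m"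
proof -
  have "(\<Sum>j<K. \<Sum>k\<le>m. P j k) = (\<Sum>k\<le>m. \<Sum>j<K. P j k)" by (rule sum.swap)
  also have "\<dots> \<le> (\<Sum>k\<le>m. 1)"
    using P m by (intro sum_mono) (auto simp: doubly_substochastic_def)
  finally have "(\<Sum>j<K. \<Sum>k\<le>m. P j k) \<le> real m + 1" by simp
  then show ?thesis
    using sum_lessThan_split_atMost[OF m, of "\<lambda>j. \<Sum>k\<le>m. P j k"]
    by (simp add: block_deficit_def sum_subtractf)
qed

lemma diag_defect_le_block_deficits:
  assumes P: "doubly_substochastic K P"
  shows "(\<Sum>k<K. 1 - P k k) \<le> 2 * (\<Sum>m<K. block_deficit P m)"
proof -
  have nonneg: "\<forall>j<K. \<forall>k<K. 0 \<le> P j k" using P by (simp add: doubly_substochastic_def)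
  have "(\<Sum>k<K. 1 - P k k) = (\<Sum>k<K. 1 - (\<Sum>k'\<le>k. P k k')) + (\<Sum>k<K. \<Sum>k'<k. P k k')"
    by (simp add: lessThan_Suc_atMost[symmetric] sum_subtractf sum.distrib)
  also have "(\<Sum>k<K. \<Sum>k'<k. P k k') = (\<Sum>k'<K. \<Sum>k=Suc k'..<K. P k k')"
  proof -
    have "(\<Sum>k<K. \<Sum>k'<k. P k k') = (\<Sum>k<K. \<Sum>k'\<in>{k'\<in>{..<K}. k' < k}. P k k')"
      by (intro sum.cong refl) auto
    also have "\<dots> = (\<Sum>k'<K. \<Sum>k\<in>{k\<in>{..<K}. k' < k}. P k k')"
      by (rule sum.swap_restrict) auto
    also have "\<dots> = (\<Sum>k'<K. \<Sum>k=Suc k'..<K. P k k')"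
      by (intro sum.cong refl) auto
    finally show ?thesis .
  qed
  also have "(\<Sum>k<K. 1 - (\<Sum>k'\<le>k. P k k')) + (\<Sum>k'<K. \<Sum>k=Suc k'..<K. P k k')
      \<le> (\<Sum>m<K. block_deficit P m) + (\<Sum>m<K. block_deficit P m)"
  proof (intro add_mono sum_mono)
    fix k assume k: "k \<in> {..<K}"
    show "1 - (\<Sum>k'\<le>k. P k k') \<le> block_deficit P k"
      unfolding block_deficit_def using k row_prefix_sum_le_1[OF P]
      by (intro member_le_sum[where f="\<lambda>j. 1 - (\<Sum>k'\<le>k. P j k')"]) auto
  next
    fix m assume m: "m \<in> {..<K}"
    have "(\<Sum>k=Suc m..<K. P k m) \<le> (\<Sum>k=Suc m..<K. \<Sum>k'\<le>m. P k k')"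
      using nonneg m by (intro sum_mono member_le_sum) auto
    also have "\<dots> \<le> block_deficit P m" using tail_mass_le_block_deficit[OF P] m by simp
    finally show "(\<Sum>k=Suc m..<K. P k m) \<le> block_deficit P m" .
  qed
  finally show ?thesis by simp
qed

text \<open>Indices \<open>j \<le> m\<close> lose at least \<open>b\<^sub>m\<close> per unit of deficit, while the mass that leaks to
  indices \<open>j > m\<close> is at most the deficit and gains at most \<open>b\<^sub>m\<^sub>+\<^sub>1\<close>.\<close>
lemma partial_sum_ge_gap_block_deficit:
  assumes b_dec: "\<forall>i j. i < j \<and> j < K \<longrightarrow> b j < b i" and b_pos: "\<forall>k<K. 0 < b k"
    and P: "doubly_substochastic K P" and m: "m < K"
  shows "gap K b m * block_deficit P m \<le> (\<Sum>k\<le>m. b k - (\<Sum>j<K. b j * P j k))"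
proof -
  define c where "c j = (\<Sum>k\<le>m. P j k)" for j
  define next_b where "next_b = (if Suc m < K then b (Suc m) else 0)"
  have c_nonneg: "0 \<le> c j" if "j < K" for j
    unfolding c_def using P that m by (intro sum_nonneg) (auto simp: doubly_substochastic_def)
  have next_b_nonneg: "0 \<le> next_b"
    using b_pos by (simp add: next_b_def less_imp_le)
  have "(\<Sum>k\<le>m. b k - (\<Sum>j<K. b j * P j k)) = (\<Sum>j\<le>m. b j) - (\<Sum>j<K. b j * c j)"
    unfolding c_def by (simp add: sum_subtractf sum_distrib_left sum.swap[of _ "{..m}"])
  also have "\<dots> = (\<Sum>j\<le>m. b j * (1 - c j)) - (\<Sum>j=Suc m..<K. b j * c j)"
    using sum_lessThan_split_atMost[OF m, of "\<lambda>j. b j * c j"]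
    by (simp add: right_diff_distrib sum_subtractf)
  finally have split: "(\<Sum>k\<le>m. b k - (\<Sum>j<K. b j * P j k))
      = (\<Sum>j\<le>m. b j * (1 - c j)) - (\<Sum>j=Suc m..<K. b j * c j)" .
  have head: "b m * block_deficit P m \<le> (\<Sum>j\<le>m. b j * (1 - c j))"
    unfolding block_deficit_def sum_distrib_left c_def[symmetric]
  proof (intro sum_mono mult_right_mono)
    fix j assume j: "j \<in> {..m}"
    then show "b m \<le> b j" using strict_antimono_imp_le[OF b_dec _ m] by simp
    show "0 \<le> 1 - c j" using row_prefix_sum_le_1[OF P _ m, of j] j m unfolding c_def by simp
  qed
  have "(\<Sum>j=Suc m..<K. b j * c j) \<le> (\<Sum>j=Suc m..<K. next_b * c j)"
  proof (intro sum_mono mult_right_mono)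
    fix j assume j: "j \<in> {Suc m..<K}"
    then show "b j \<le> next_b" using strict_antimono_imp_le[OF b_dec, of "Suc m" j] by (simp add: next_b_def)
    show "0 \<le> c j" using c_nonneg j by simp
  qed
  also have "\<dots> \<le> next_b * block_deficit P m"
    using tail_mass_le_block_deficit[OF P m] next_b_nonneg
    unfolding sum_distrib_left[symmetric] c_def by (rule mult_left_mono)
  finally have tail: "(\<Sum>j=Suc m..<K. b j * c j) \<le> next_b * block_deficit P m" .
  have "gap K b m * block_deficit P m = b m * block_deficit P m - next_b * block_deficit P m"
    by (simp add: gap_def next_b_def left_diff_distrib)
  with split head tail show ?thesis by linarith
qed

lemma weighted_defect_lower_bound:
  assumes a_dec: "\<forall>i j. i < j \<and> j < K \<longrightarrow> a j < a i" and a_pos: "\<forall>k<K. 0 < a k"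
    and b_dec: "\<forall>i j. i < j \<and> j < K \<longrightarrow> b j < b i" and b_pos: "\<forall>k<K. 0 < b k"
    and K: "0 < K" and P: "doubly_substochastic K P"
  shows "min_gap_product K a b / 2 * (\<Sum>k<K. 1 - P k k)
    \<le> (\<Sum>k<K. a k * (b k - (\<Sum>j<K. b j * P j k)))"
proof -
  let ?\<mu> = "min_gap_product K a b"
  have "?\<mu> / 2 * (\<Sum>k<K. 1 - P k k) \<le> ?\<mu> / 2 * (2 * (\<Sum>m<K. block_deficit P m))"
    using min_gap_product_pos[OF assms(1-5)] diag_defect_le_block_deficits[OF P]
    by (intro mult_left_mono) auto
  also have "\<dots> = (\<Sum>m<K. ?\<mu> * block_deficit P m)"
    by (simp add: sum_distrib_left)
  also have "\<dots> \<le> (\<Sum>m<K. gap K a m * (gap K b m * block_deficit P m))"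
    using min_gap_product_le block_deficit_nonneg[OF P]
    by (intro sum_mono) (simp add: mult.assoc[symmetric] mult_right_mono)
  also have "\<dots> \<le> (\<Sum>m<K. gap K a m * (\<Sum>k\<le>m. b k - (\<Sum>j<K. b j * P j k)))"
    using partial_sum_ge_gap_block_deficit[OF b_dec b_pos P] gap_pos[OF a_dec a_pos]
    by (intro sum_mono mult_left_mono) (auto intro: less_imp_le)
  also have "\<dots> = (\<Sum>k<K. a k * (b k - (\<Sum>j<K. b j * P j k)))"
    by (rule sum_mult_eq_sum_gap_partial_sums[symmetric])
  finally show ?thesis .
qed

section \<open>Columns, Stiefel matrices and the operator norm\<close>

text \<open>Vectors of length \<open>d\<close> are encoded as functions \<open>nat \<Rightarrow> real\<close>, of which only the first \<open>d\<close> values matter.\<close>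

definition dot :: "nat \<Rightarrow> (nat \<Rightarrow> real) \<Rightarrow> (nat \<Rightarrow> real) \<Rightarrow> real" where
  "dot d x y = (\<Sum>i<d. x i * y i)"

definition col_fun :: "real mat \<Rightarrow> nat \<Rightarrow> nat \<Rightarrow> real" where
  "col_fun X k = (\<lambda>i. X $$ (i,k))"

definition bilin :: "nat \<Rightarrow> real mat \<Rightarrow> (nat \<Rightarrow> real) \<Rightarrow> (nat \<Rightarrow> real) \<Rightarrow> real" where
  "bilin d A u w = (\<Sum>p<d. \<Sum>q<d. u p * A $$ (p,q) * w q)"

definition mat_app :: "nat \<Rightarrow> real mat \<Rightarrow> (nat \<Rightarrow> real) \<Rightarrow> nat \<Rightarrow> real" where
  "mat_app d A w = (\<lambda>p. \<Sum>q<d. A $$ (p,q) * w q)"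

lemma mult_mat_index_sum:
  fixes A B :: "real mat"
  assumes "A \<in> carrier_mat n m" "B \<in> carrier_mat m r" "i < n" "j < r"
  shows "(A * B) $$ (i,j) = (\<Sum>l<m. A $$ (i,l) * B $$ (l,j))"
  using assms by (simp add: scalar_prod_def atLeast0LessThan)

lemma transpose_mult_self_index:
  assumes "X \<in> carrier_mat d K" and "k < K" and "k' < K"
  shows "(X\<^sup>T * X) $$ (k,k') = dot d (col_fun X k) (col_fun X k')"
proof -
  have "(X\<^sup>T * X) $$ (k,k') = (\<Sum>l<d. X\<^sup>T $$ (k,l) * X $$ (l,k'))"
    using assms by (intro mult_mat_index_sum[where m=d]) auto
  also have "\<dots> = dot d (col_fun X k) (col_fun X k')"
    unfolding dot_def col_fun_def using assms by (intro sum.cong) auto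
  finally show ?thesis .
qed

lemma stiefel_iff_orthonormal:
  "X \<in> stiefel d K \<longleftrightarrow> X \<in> carrier_mat d K \<and>
     (\<forall>k<K. \<forall>k'<K. dot d (col_fun X k) (col_fun X k') = (if k = k' then 1 else 0))"
proof (cases "X \<in> carrier_mat d K")
  case True
  have "(X\<^sup>T * X) $$ (k,k') = dot d (col_fun X k) (col_fun X k')"
    and "1\<^sub>m K $$ (k,k') = (if k = k' then 1 else 0)" if "k < K" "k' < K" for k k'
    using transpose_mult_self_index[OF True that] that by auto
  moreover have "dim_row (X\<^sup>T * X) = K" "dim_col (X\<^sup>T * X) = K" using True by auto
  ultimately have "X\<^sup>T * X = 1\<^sub>m K
      \<longleftrightarrow> (\<forall>k<K. \<forall>k'<K. dot d (col_fun X k) (col_fun X k') = (if k = k' then 1 else 0))"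
    unfolding mat_eq_iff by (auto simp del: index_mult_mat)
  with True show ?thesis by (simp add: stiefel_def)
qed (simp add: stiefel_def)

lemma dot_commute: "dot d x y = dot d y x" unfolding dot_def by (simp add: mult.commute)

lemma sum_power2_diff:
  fixes f g :: "nat \<Rightarrow> real"
  shows "(\<Sum>i<d. (f i - g i)^2) = (\<Sum>i<d. (f i)^2) - 2 * (\<Sum>i<d. f i * g i) + (\<Sum>i<d. g i * g i)"
proof -
  have "\<And>i. (f i - g i)^2 = (f i)^2 - 2*(f i * g i) + g i * g i" by (simp add: power2_eq_square algebra_simps)
  then show ?thesis by (simp add: sum.distrib sum_subtractf sum_distrib_left)
qed

lemma bessel_inequality:
  assumes U: "U \<in> stiefel d K"
  shows "(\<Sum>j<K. (dot d (col_fun U j) w)^2) \<le> dot d w w"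
proof -
  have UC: "U \<in> carrier_mat d K" and Uo: "\<forall>k<K. \<forall>k'<K. dot d (col_fun U k) (col_fun U k') = (if k = k' then 1 else 0)"
    using U by (auto simp: stiefel_iff_orthonormal)
  define c where "c j = dot d (col_fun U j) w" for j
  define r where "r i = (\<Sum>j<K. c j * U $$ (i,j))" for i
  have wr: "(\<Sum>i<d. w i * r i) = (\<Sum>j<K. (c j)^2)"
  proof -
    have "(\<Sum>i<d. w i * r i) = (\<Sum>j<K. c j * (\<Sum>i<d. U $$ (i,j) * w i))"
      unfolding r_def by (simp add: sum_distrib_left sum_distrib_right sum.swap[of _ "{..<K}"] mult_ac)
    then show ?thesis unfolding c_def dot_def col_fun_def by (simp add: power2_eq_square)
  qed
  have Ur: "(\<Sum>i<d. U $$ (i,j) * r i) = c j" if j: "j < K" for j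
  proof -
    have "(\<Sum>i<d. U $$ (i,j) * r i) = (\<Sum>j'<K. c j' * dot d (col_fun U j) (col_fun U j'))"
      unfolding r_def dot_def col_fun_def
      by (simp add: sum_distrib_left sum_distrib_right sum.swap[of _ "{..<K}"] mult_ac)
    also have "\<dots> = (\<Sum>j'<K. if j' = j then c j else 0)"
      using Uo j by (intro sum.cong refl) auto
    finally show ?thesis using j by simp
  qed
  have rr: "(\<Sum>i<d. r i * r i) = (\<Sum>j<K. (c j)^2)"
  proof -
    have e: "r i * r i = (\<Sum>j<K. c j * (U $$ (i,j) * r i))" for i
      by (subst (1) r_def) (simp add: sum_distrib_right sum_distrib_left mult_ac)
    have "(\<Sum>i<d. r i * r i) = (\<Sum>i<d. \<Sum>j<K. c j * (U $$ (i,j) * r i))"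
      by (simp only: e)
    also have "\<dots> = (\<Sum>j<K. \<Sum>i<d. c j * (U $$ (i,j) * r i))" by (rule sum.swap)
    also have "\<dots> = (\<Sum>j<K. c j * (\<Sum>i<d. U $$ (i,j) * r i))" by (simp add: sum_distrib_left)
    also have "\<dots> = (\<Sum>j<K. (c j)^2)" by (intro sum.cong refl) (simp add: Ur power2_eq_square)
    finally show ?thesis .
  qed
  have "0 \<le> (\<Sum>i<d. (w i - r i)^2)" by (simp add: sum_nonneg)
  also have "\<dots> = dot d w w - (\<Sum>j<K. (c j)^2)"
    unfolding sum_power2_diff wr rr dot_def by (simp add: power2_eq_square)
  finally show ?thesis unfolding c_def by simp
qed

lemma fro_norm_nonneg: "0 \<le> fro_norm A"
  unfolding fro_norm_def by (intro real_sqrt_ge_zero sum_nonneg) auto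

lemma fro_norm_minus_commute:
  assumes "A \<in> carrier_mat n m" "B \<in> carrier_mat n m"
  shows "fro_norm (A - B) = fro_norm (B - A)"
proof -
  have "(\<Sum>i<n. \<Sum>j<m. ((A - B) $$ (i,j))^2) = (\<Sum>i<n. \<Sum>j<m. ((B - A) $$ (i,j))^2)"
    using assms by (intro sum.cong refl) (simp add: power2_commute)
  then show ?thesis unfolding fro_norm_def using assms by simp
qed

lemma diag_of_carrier: "diag_of K f \<in> carrier_mat K K" by (simp add: diag_of_def)

lemma mult_diag_of_index:
  assumes "A \<in> carrier_mat n K" "p < n" "j < K"
  shows "(A * diag_of K f) $$ (p,j) = A $$ (p,j) * f j"
proof -
  have "(A * diag_of K f) $$ (p,j) = (\<Sum>l<K. A $$ (p,l) * diag_of K f $$ (l,j))"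
    using assms by (intro mult_mat_index_sum[where m=K]) (auto simp: diag_of_carrier)
  also have "\<dots> = (\<Sum>l<K. (if l = j then A $$ (p,l) * f j else 0))"
    using assms by (intro sum.cong) (auto simp: diag_of_def)
  also have "\<dots> = A $$ (p,j) * f j" using assms by simp
  finally show ?thesis .
qed

lemma dot_col_mult_diag_of:
  assumes "Q \<in> carrier_mat d K" and "k < K"
  shows "dot d z (col_fun (Q * diag_of K f) k) = f k * dot d z (col_fun Q k)"
  unfolding dot_def col_fun_def using mult_diag_of_index[OF assms(1) _ assms(2)]
  by (simp add: sum_distrib_left mult_ac)

lemma sign_vector_square:
  assumes "length q = K" and "set q \<subseteq> {-1, 1}" and "k < K"
  shows "q ! k * q ! k = (1::real)"
proof -
  have "q ! k \<in> set q" using assms by simp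
  then have "q ! k \<in> {-1, 1}" using assms(2) by blast
  then show ?thesis by auto
qed

lemma stiefel_mult_signs:
  assumes Q: "Q \<in> stiefel d K" and "length q = K" and "set q \<subseteq> {-1, 1}"
  shows "Q * diag_of K (\<lambda>k. q ! k) \<in> stiefel d K"
  unfolding stiefel_iff_orthonormal
proof (intro conjI allI impI)
  have QC: "Q \<in> carrier_mat d K" using Q by (simp add: stiefel_def)
  then show "Q * diag_of K (\<lambda>k. q ! k) \<in> carrier_mat d K" using diag_of_carrier by auto
  fix j k assume j: "j < K" and k: "k < K"
  have "dot d (col_fun (Q * diag_of K (\<lambda>k. q ! k)) j) (col_fun (Q * diag_of K (\<lambda>k. q ! k)) k)
      = q ! k * (q ! j * dot d (col_fun Q j) (col_fun Q k))"
    using dot_col_mult_diag_of[OF QC k] dot_col_mult_diag_of[OF QC j] by (simp add: dot_commute)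
  then show "dot d (col_fun (Q * diag_of K (\<lambda>k. q ! k)) j) (col_fun (Q * diag_of K (\<lambda>k. q ! k)) k)
      = (if j = k then 1 else 0)"
    using Q j k sign_vector_square[OF assms(2,3) k] by (auto simp: stiefel_iff_orthonormal mult_ac)
qed

lemma bilin_diff_left: "bilin d A (\<lambda>i. u i - x i) w = bilin d A u w - bilin d A x w"
  unfolding bilin_def by (simp add: left_diff_distrib sum_subtractf)

lemma bilin_diff_right: "bilin d A w (\<lambda>i. u i - x i) = bilin d A w u - bilin d A w x"
  unfolding bilin_def by (simp add: right_diff_distrib sum_subtractf)

lemma bilin_commute:
  assumes "\<forall>p<d. \<forall>q<d. A $$ (p,q) = A $$ (q,p)"
  shows "bilin d A u w = bilin d A w u"
proof -
  have "bilin d A w u = (\<Sum>q<d. \<Sum>p<d. w p * A $$ (p,q) * u q)"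
    unfolding bilin_def by (rule sum.swap)
  also have "\<dots> = bilin d A u w" unfolding bilin_def
    using assms by (intro sum.cong refl) (simp add: mult_ac)
  finally show ?thesis by simp
qed

lemma bilin_self_diff:
  assumes "\<forall>p<d. \<forall>q<d. A $$ (p,q) = A $$ (q,p)"
  shows "bilin d A u u - bilin d A x x = 2 * bilin d A (\<lambda>i. u i - x i) x + bilin d A (\<lambda>i. u i - x i) (\<lambda>i. u i - x i)"
  using bilin_commute[OF assms, of x u]
  by (simp add: bilin_diff_left bilin_diff_right algebra_simps)

lemma bilin_diff_smult:
  assumes "\<forall>p<d. \<forall>q<d. A $$ (p,q) = B $$ (p,q) - c * S $$ (p,q)"
  shows "bilin d A u w = bilin d B u w - c * bilin d S u w"
proof -
  have "bilin d A u w = (\<Sum>p<d. \<Sum>q<d. u p * B $$ (p,q) * w q - c * (u p * S $$ (p,q) * w q))"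
    unfolding bilin_def using assms by (intro sum.cong refl) (simp add: right_diff_distrib left_diff_distrib)
  then show ?thesis unfolding bilin_def by (simp add: sum_subtractf sum_distrib_left)
qed

lemma bilin_self_eq_dot_mat_app: "bilin d A w w = (\<Sum>p<d. w p * mat_app d A w p)"
  unfolding bilin_def mat_app_def by (simp add: sum_distrib_left mult_ac)

lemma mult_mat_vec_index:
  assumes "A \<in> carrier_mat d d" "p < d"
  shows "(A *\<^sub>v vec d f) $ p = mat_app d A f p"
  using assms by (simp add: mat_app_def scalar_prod_def atLeast0LessThan)

lemma vnorm_vec: "vnorm (vec d f) = sqrt (\<Sum>i<d. (f i)^2)"
  unfolding vnorm_def by simp

lemma bdd_above_op_norm_set:
  assumes A: "A \<in> carrier_mat d d"
  shows "bdd_above {vnorm (A *\<^sub>v x) | x. x \<in> carrier_vec (dim_col A) \<and> vnorm x \<le> 1}"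
proof (rule bdd_aboveI)
  fix r assume "r \<in> {vnorm (A *\<^sub>v x) | x. x \<in> carrier_vec (dim_col A) \<and> vnorm x \<le> 1}"
  then obtain x where x: "x \<in> carrier_vec d" "vnorm x \<le> 1" and r: "r = vnorm (A *\<^sub>v x)" using A by auto
  have sx: "(\<Sum>i<d. (x $ i)^2) \<le> 1"
  proof -
    have "sqrt (\<Sum>i<d. (x $ i)^2) \<le> 1" using x unfolding vnorm_def by simp
    then show ?thesis by simp
  qed
  have "(\<Sum>p<d. ((A *\<^sub>v x) $ p)^2) \<le> (\<Sum>p<d. \<Sum>q<d. (A $$ (p,q))^2)"
  proof (intro sum_mono)
    fix p assume p: "p \<in> {..<d}"
    have "(A *\<^sub>v x) $ p = (\<Sum>q<d. A $$ (p,q) * x $ q)"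
      using A x p by (simp add: scalar_prod_def atLeast0LessThan)
    then have "((A *\<^sub>v x) $ p)^2 \<le> (\<Sum>q<d. (A $$ (p,q))^2) * (\<Sum>q<d. (x $ q)^2)"
      using Cauchy_Schwarz_ineq_sum by simp
    also have "\<dots> \<le> (\<Sum>q<d. (A $$ (p,q))^2) * 1"
      using sx by (intro mult_left_mono) (auto intro: sum_nonneg)
    finally show "((A *\<^sub>v x) $ p)^2 \<le> (\<Sum>q<d. (A $$ (p,q))^2)" by simp
  qed
  then show "r \<le> sqrt (\<Sum>p<d. \<Sum>q<d. (A $$ (p,q))^2)"
    using r A unfolding vnorm_def by simp
qed

lemma vnorm_mult_le_op_norm:
  assumes A: "A \<in> carrier_mat d d" and x: "x \<in> carrier_vec d" "vnorm x \<le> 1"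
  shows "vnorm (A *\<^sub>v x) \<le> op_norm A"
  unfolding op_norm_def using A x
  by (intro cSup_upper[OF _ bdd_above_op_norm_set[OF A]]) auto

lemma op_norm_nonneg:
  assumes A: "A \<in> carrier_mat d d"
  shows "0 \<le> op_norm A"
proof -
  have "vnorm (A *\<^sub>v 0\<^sub>v d) \<le> op_norm A"
    using A by (intro vnorm_mult_le_op_norm) (auto simp: vnorm_def)
  moreover have "vnorm (A *\<^sub>v 0\<^sub>v d) = 0" using A unfolding vnorm_def
    by (simp add: scalar_prod_def)
  ultimately show ?thesis by simp
qed

lemma mat_app_norm_le_op_norm:
  assumes A: "A \<in> carrier_mat d d"
  shows "sqrt (\<Sum>p<d. (mat_app d A w p)^2) \<le> op_norm A * sqrt (\<Sum>i<d. (w i)^2)"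
proof (cases "(\<Sum>i<d. (w i)^2) = 0")
  case True
  then have "\<forall>i<d. w i = 0" by (simp add: sum_nonneg_eq_0_iff)
  then show ?thesis by (simp add: mat_app_def)
next
  case False
  define nw where "nw = sqrt (\<Sum>i<d. (w i)^2)"
  have nw: "0 < nw" unfolding nw_def using False by (simp add: sum_nonneg order_le_neq_trans)
  define u where "u = vec d (\<lambda>i. w i / nw)"
  have "(\<Sum>i<d. (w i / nw)^2) = 1"
    using nw unfolding nw_def by (simp add: power_divide flip: sum_divide_distrib)
  then have "vnorm (A *\<^sub>v u) \<le> op_norm A"
    using A by (intro vnorm_mult_le_op_norm) (simp_all add: u_def vnorm_vec)
  moreover have "(\<Sum>p<d. ((A *\<^sub>v u) $ p)^2) = (\<Sum>p<d. (mat_app d A w p / nw)^2)"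
    unfolding u_def using A
    by (intro sum.cong refl, subst mult_mat_vec_index) (auto simp: mat_app_def sum_divide_distrib)
  then have "(\<Sum>p<d. ((A *\<^sub>v u) $ p)^2) = (\<Sum>p<d. (mat_app d A w p)^2) / nw^2"
    by (simp add: power_divide sum_divide_distrib)
  then have "vnorm (A *\<^sub>v u) = sqrt (\<Sum>p<d. (mat_app d A w p)^2) / nw"
    using A nw unfolding vnorm_def by (simp add: real_sqrt_divide)
  ultimately show ?thesis
    using nw by (simp add: divide_le_eq nw_def)
qed

lemma abs_bilin_self_le_op_norm:
  assumes A: "A \<in> carrier_mat d d"
  shows "\<bar>bilin d A w w\<bar> \<le> op_norm A * dot d w w"
proof -
  let ?nw = "sqrt (\<Sum>i<d. (w i)^2)"
  have "\<bar>bilin d A w w\<bar> = sqrt ((\<Sum>p<d. w p * mat_app d A w p)^2)"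
    by (simp add: bilin_self_eq_dot_mat_app)
  also have "\<dots> \<le> sqrt ((\<Sum>i<d. (w i)^2) * (\<Sum>p<d. (mat_app d A w p)^2))"
    by (intro real_sqrt_le_mono Cauchy_Schwarz_ineq_sum)
  also have "\<dots> = ?nw * sqrt (\<Sum>p<d. (mat_app d A w p)^2)" by (simp add: real_sqrt_mult)
  also have "\<dots> \<le> ?nw * (op_norm A * ?nw)"
    using mat_app_norm_le_op_norm[OF A] by (intro mult_left_mono) (auto simp: sum_nonneg)
  also have "\<dots> = op_norm A * dot d w w"
    by (simp add: dot_def sum_nonneg power2_eq_square)
  finally show ?thesis .
qed

section \<open>Quadratic growth of the population objective\<close>

lemma ntot_pos:
  assumes "1 \<le> L" and "\<forall>l<L. 1 \<le> nl l"
  shows "0 < ntot L nl"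
proof -
  have "nl 0 \<le> ntot L nl" unfolding ntot_def using assms by (intro member_le_sum) auto
  then show ?thesis using assms by auto
qed

lemma frac_self_add_strict_mono:
  fixes x y v :: real
  assumes "0 < x" and "x < y" and "0 < v"
  shows "x / (x + v) < y / (y + v)"
proof -
  have "x * (y + v) < y * (x + v)" using assms by (simp add: algebra_simps)
  then show ?thesis using assms by (simp add: field_simps)
qed

lemma acoef_pos:
  assumes "\<forall>k<K. 0 < lam k" and "1 \<le> L" and "\<forall>l<L. 1 \<le> nl l" and "\<forall>l<L. 0 < v l"
    and "k < K"
  shows "0 < acoef L nl lam v k"
  unfolding acoef_def
proof (rule sum_pos)
  fix l assume l: "l \<in> {..<L}"
  have w: "0 < wgt lam v l k" unfolding wgt_def using assms l by (auto intro!: divide_pos_pos add_pos_pos)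
  have r: "0 < real (nl l) / real (ntot L nl)"
    using assms l ntot_pos[OF assms(2,3)] by (auto intro!: divide_pos_pos)
  show "0 < wgt lam v l k * (real (nl l) / real (ntot L nl)) * (1 / v l)"
    by (rule mult_pos_pos[OF mult_pos_pos[OF w r]]) (use assms l in simp)
qed (use assms in \<open>auto simp: lessThan_empty_iff\<close>)

lemma acoef_strict_antimono:
  assumes lam_dec: "\<forall>i j. i < j \<and> j < K \<longrightarrow> lam j < lam i" and lam_pos: "\<forall>k<K. 0 < lam k"
    and L: "1 \<le> L" and nl: "\<forall>l<L. 1 \<le> nl l" and v_pos: "\<forall>l<L. 0 < v l"
  shows "\<forall>i j. i < j \<and> j < K \<longrightarrow> acoef L nl lam v j < acoef L nl lam v i"
proof (intro allI impI)
  fix i j assume ij: "i < j \<and> j < K"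
  show "acoef L nl lam v j < acoef L nl lam v i"
    unfolding acoef_def
  proof (rule sum_strict_mono)
    fix l assume l: "l \<in> {..<L}"
    have "wgt lam v l j < wgt lam v l i"
      unfolding wgt_def using ij lam_dec lam_pos v_pos l by (intro frac_self_add_strict_mono) auto
    moreover have "0 < real (nl l) / real (ntot L nl) * (1 / v l)"
      using nl v_pos l ntot_pos[OF L nl] by (auto intro!: divide_pos_pos mult_pos_pos)
    ultimately show "wgt lam v l j * (real (nl l) / real (ntot L nl)) * (1 / v l)
        < wgt lam v l i * (real (nl l) / real (ntot L nl)) * (1 / v l)"
      by (simp only: mult.assoc mult_strict_right_mono)
  qed (use L in \<open>auto simp: lessThan_empty_iff\<close>)
qed

lemma sigQ_carrier: "Q \<in> carrier_mat d K \<Longrightarrow> sigQ K Q lam \<in> carrier_mat d d"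
  unfolding sigQ_def using diag_of_carrier[of K lam] by (metis mult_carrier_mat transpose_carrier_mat)

lemma sigQ_index:
  assumes "Q \<in> carrier_mat d K" "p < d" "q < d"
  shows "sigQ K Q lam $$ (p,q) = (\<Sum>j<K. Q $$ (p,j) * lam j * Q $$ (q,j))"
proof -
  have "sigQ K Q lam $$ (p,q) = (\<Sum>j<K. (Q * diag_of K lam) $$ (p,j) * Q\<^sup>T $$ (j,q))"
    unfolding sigQ_def using assms
    by (intro mult_mat_index_sum[where m=K]) (auto intro: mult_carrier_mat diag_of_carrier)
  also have "\<dots> = (\<Sum>j<K. Q $$ (p,j) * lam j * Q $$ (q,j))"
    using assms by (intro sum.cong) (auto simp: mult_diag_of_index)
  finally show ?thesis .
qed

lemma bilin_sigQ_self:
  assumes "Q \<in> carrier_mat d K"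
  shows "bilin d (sigQ K Q lam) x x = (\<Sum>j<K. lam j * (dot d (col_fun Q j) x)^2)"
proof -
  have "bilin d (sigQ K Q lam) x x = (\<Sum>p<d. \<Sum>q<d. \<Sum>j<K. lam j * (Q $$ (p,j) * x p) * (Q $$ (q,j) * x q))"
    unfolding bilin_def using assms
    by (intro sum.cong refl) (simp add: sigQ_index sum_distrib_left sum_distrib_right mult_ac)
  also have "\<dots> = (\<Sum>j<K. \<Sum>p<d. \<Sum>q<d. lam j * (Q $$ (p,j) * x p) * (Q $$ (q,j) * x q))"
    by (simp add: sum.swap[of _ "{..<K}"])
  also have "\<dots> = (\<Sum>j<K. lam j * (dot d (col_fun Q j) x)^2)"
    unfolding dot_def col_fun_def power2_eq_square
    by (simp add: sum_distrib_left sum_distrib_right mult_ac)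
  finally show ?thesis .
qed

lemma transpose_mult_mult_self_diag:
  assumes S: "S \<in> carrier_mat d d" and X: "X \<in> carrier_mat d K" and k: "k < K"
  shows "(X\<^sup>T * S * X) $$ (k,k) = bilin d S (col_fun X k) (col_fun X k)"
proof -
  have XS: "X\<^sup>T * S \<in> carrier_mat K d" using S X by auto
  have "(X\<^sup>T * S * X) $$ (k,k) = (\<Sum>p<d. (X\<^sup>T * S) $$ (k,p) * X $$ (p,k))"
    using k XS X by (intro mult_mat_index_sum[where m=d]) auto
  also have "\<dots> = (\<Sum>p<d. (\<Sum>q<d. X $$ (q,k) * S $$ (q,p)) * X $$ (p,k))"
    using k X S by (intro sum.cong refl) (subst mult_mat_index_sum[where m=d], auto)
  also have "\<dots> = bilin d S (col_fun X k) (col_fun X k)"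
    unfolding bilin_def col_fun_def sum_distrib_right by (rule sum.swap)
  finally show ?thesis .
qed

lemma gfun_eq_sum_bilin:
  assumes Q: "Q \<in> carrier_mat d K" and X: "X \<in> carrier_mat d K"
  shows "gfun K L nl Q lam v X = (\<Sum>k<K. acoef L nl lam v k * bilin d (sigQ K Q lam) (col_fun X k) (col_fun X k))"
proof -
  have S: "sigQ K Q lam \<in> carrier_mat d d" by (rule sigQ_carrier[OF Q])
  then have XSX: "X\<^sup>T * sigQ K Q lam * X \<in> carrier_mat K K" using X by auto
  have "gfun K L nl Q lam v X
      = (\<Sum>k<K. (X\<^sup>T * sigQ K Q lam * X * diag_of K (acoef L nl lam v)) $$ (k,k))"
    unfolding gfun_def mat_trace_def using X by simp
  also have "\<dots> = (\<Sum>k<K. acoef L nl lam v k * bilin d (sigQ K Q lam) (col_fun X k) (col_fun X k))"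
    using mult_diag_of_index[OF XSX] transpose_mult_mult_self_diag[OF S X]
    by (intro sum.cong refl) simp
  finally show ?thesis .
qed

lemma doubly_substochastic_overlaps:
  assumes Q: "Q \<in> stiefel d K" and X: "X \<in> stiefel d K"
  shows "doubly_substochastic K (\<lambda>j k. (dot d (col_fun Q j) (col_fun X k))^2)"
  unfolding doubly_substochastic_def
proof (intro conjI allI impI)
  fix j assume "j < K"
  then show "(\<Sum>k<K. (dot d (col_fun Q j) (col_fun X k))^2) \<le> 1"
    using bessel_inequality[OF X, of "col_fun Q j"] Q by (simp add: stiefel_iff_orthonormal dot_commute)
next
  fix k assume "k < K"
  then show "(\<Sum>j<K. (dot d (col_fun Q j) (col_fun X k))^2) \<le> 1"
    using bessel_inequality[OF Q, of "col_fun X k"] X by (simp add: stiefel_iff_orthonormal)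
qed simp

lemma gfun_gap_eq:
  assumes Q: "Q \<in> stiefel d K" and X: "X \<in> stiefel d K"
  shows "gfun K L nl Q lam v Q - gfun K L nl Q lam v X
    = (\<Sum>k<K. acoef L nl lam v k * (lam k - (\<Sum>j<K. lam j * (dot d (col_fun Q j) (col_fun X k))^2)))"
proof -
  have QC: "Q \<in> carrier_mat d K"
    and Qo: "\<forall>k<K. \<forall>k'<K. dot d (col_fun Q k) (col_fun Q k') = (if k = k' then 1 else 0)"
    using Q by (auto simp: stiefel_iff_orthonormal)
  have XC: "X \<in> carrier_mat d K" using X by (auto simp: stiefel_def)
  have "(\<Sum>j<K. lam j * (dot d (col_fun Q j) (col_fun Q k))^2) = lam k" if "k < K" for k
  proof -
    have "(\<Sum>j<K. lam j * (dot d (col_fun Q j) (col_fun Q k))^2) = (\<Sum>j<K. if j = k then lam k else 0)"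
      using Qo that by (intro sum.cong refl) auto
    then show ?thesis using that by simp
  qed
  then have "gfun K L nl Q lam v Q = (\<Sum>k<K. acoef L nl lam v k * lam k)"
    unfolding gfun_eq_sum_bilin[OF QC QC] bilin_sigQ_self[OF QC] by simp
  then show ?thesis
    unfolding gfun_eq_sum_bilin[OF QC XC] bilin_sigQ_self[OF QC]
    by (simp add: right_diff_distrib sum_subtractf)
qed

lemma gfun_mult_signs:
  assumes Q: "Q \<in> stiefel d K" and q: "length q = K" "set q \<subseteq> {-1, 1}"
  shows "gfun K L nl Q lam v (Q * diag_of K (\<lambda>k. q ! k)) = gfun K L nl Q lam v Q"
proof -
  have QC: "Q \<in> carrier_mat d K"
    and Qo: "\<forall>k<K. \<forall>k'<K. dot d (col_fun Q k) (col_fun Q k') = (if k = k' then 1 else 0)"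
    using Q by (auto simp: stiefel_iff_orthonormal)
  have "(\<Sum>j<K. lam j * (dot d (col_fun Q j) (col_fun (Q * diag_of K (\<lambda>k. q ! k)) k))^2) = lam k"
    if k: "k < K" for k
  proof -
    have "(\<Sum>j<K. lam j * (dot d (col_fun Q j) (col_fun (Q * diag_of K (\<lambda>k. q ! k)) k))^2)
        = (\<Sum>j<K. if j = k then lam k else 0)"
      using Qo k sign_vector_square[OF q k]
      by (intro sum.cong refl) (auto simp: dot_col_mult_diag_of[OF QC k] power2_eq_square)
    then show ?thesis using k by simp
  qed
  then have "(\<Sum>k<K. acoef L nl lam v k
      * (lam k - (\<Sum>j<K. lam j * (dot d (col_fun Q j) (col_fun (Q * diag_of K (\<lambda>k. q ! k)) k))^2))) = 0"
    by (intro sum.neutral) simp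
  then show ?thesis
    using gfun_gap_eq[OF Q stiefel_mult_signs[OF Q q], of L nl lam v] by simp
qed

lemma dF_set_finite:
  "finite {fro_norm (X - Q * diag_of K (\<lambda>k. q ! k)) | q. length q = K \<and> set q \<subseteq> {-1, 1}}"
proof -
  have "finite {q :: real list. set q \<subseteq> {-1,1} \<and> length q = K}"
    by (rule finite_lists_length_eq) auto
  then have "finite {q :: real list. length q = K \<and> set q \<subseteq> {-1,1}}"
    by (simp add: conj_commute)
  then show ?thesis by (simp add: setcompr_eq_image)
qed

lemma dF_le:
  assumes "length q = K" "set q \<subseteq> {-1, 1}"
  shows "dF K X Q \<le> fro_norm (X - Q * diag_of K (\<lambda>k. q ! k))"
  unfolding dF_def using assms dF_set_finite by (intro Min_le) auto

lemma dF_attained: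
  "\<exists>q. length q = K \<and> set q \<subseteq> {-1, 1} \<and> dF K X Q = fro_norm (X - Q * diag_of K (\<lambda>k. q ! k))"
proof -
  have ne: "{fro_norm (X - Q * diag_of K (\<lambda>k. q ! k)) | q. length q = K \<and> set q \<subseteq> {-1, 1}} \<noteq> {}"
    by (auto intro!: exI[of _ "replicate K 1"])
  show ?thesis using Min_in[OF dF_set_finite ne] unfolding dF_def by auto
qed

lemma dF_nonneg: "0 \<le> dF K X Q"
  using dF_attained[of K X Q] fro_norm_nonneg by metis

lemma fro_norm_minus_signs_power2:
  assumes XC: "X \<in> carrier_mat d K" and QC: "Q \<in> carrier_mat d K"
  shows "(fro_norm (X - Q * diag_of K f))^2 = (\<Sum>k<K. \<Sum>i<d. (X $$ (i,k) - Q $$ (i,k) * f k)^2)"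
proof -
  have QD: "Q * diag_of K f \<in> carrier_mat d K" using QC diag_of_carrier by auto
  have dr: "dim_row (X - Q * diag_of K f) = d" and dc: "dim_col (X - Q * diag_of K f) = K"
    using QD by auto
  have "(fro_norm (X - Q * diag_of K f))^2 = (\<Sum>i<d. \<Sum>k<K. ((X - Q * diag_of K f) $$ (i,k))^2)"
    unfolding fro_norm_def dr dc by (intro real_sqrt_pow2 sum_nonneg) auto
  also have "\<dots> = (\<Sum>i<d. \<Sum>k<K. (X $$ (i,k) - Q $$ (i,k) * f k)^2)"
  proof (intro sum.cong refl)
    fix i k assume i: "i \<in> {..<d}" and k: "k \<in> {..<K}"
    have "(X - Q * diag_of K f) $$ (i,k) = X $$ (i,k) - (Q * diag_of K f) $$ (i,k)"
      using i k carrier_matD[OF QD] by (intro index_minus_mat(1)) auto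
    then show "((X - Q * diag_of K f) $$ (i,k))^2 = (X $$ (i,k) - Q $$ (i,k) * f k)^2"
      using mult_diag_of_index[OF QC, of i k f] i k by simp
  qed
  finally show ?thesis by (simp add: sum.swap[of _ "{..<d}"])
qed

lemma sum_power2_diff_signed_le:
  assumes x: "dot d x x = 1" and u: "dot d u u = 1" and t: "(dot d u x)^2 \<le> 1"
  shows "(\<Sum>i<d. (x i - u i * (if 0 \<le> dot d u x then 1 else -1))^2) \<le> 2 * (1 - (dot d u x)^2)"
proof -
  let ?t = "dot d u x" and ?\<sigma> = "if 0 \<le> dot d u x then 1 else -1 :: real"
  have "(\<Sum>i<d. (x i - u i * ?\<sigma>)^2) = dot d x x - 2 * ?\<sigma> * ?t + (?\<sigma> * ?\<sigma>) * dot d u u"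
    unfolding sum_power2_diff dot_def by (simp add: power2_eq_square sum_distrib_left mult_ac)
  also have "\<dots> = 2 - 2 * \<bar>?t\<bar>" using x u by auto
  also have "\<dots> \<le> 2 * (1 - ?t^2)"
  proof -
    have "\<bar>?t\<bar> \<le> 1" using t by (simp add: abs_square_le_1)
    then have "\<bar>?t\<bar> * \<bar>?t\<bar> \<le> \<bar>?t\<bar>" by (intro mult_left_le) auto
    then show ?thesis by (simp add: power2_eq_square)
  qed
  finally show ?thesis .
qed

lemma dF_power2_le:
  assumes Q: "Q \<in> stiefel d K" and X: "X \<in> stiefel d K"
  shows "(dF K X Q)^2 \<le> 2 * (\<Sum>k<K. 1 - (dot d (col_fun Q k) (col_fun X k))^2)"
proof -
  have QC: "Q \<in> carrier_mat d K" and Qo: "\<forall>k<K. dot d (col_fun Q k) (col_fun Q k) = 1"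
    using Q by (auto simp: stiefel_iff_orthonormal)
  have XC: "X \<in> carrier_mat d K" and Xo: "\<forall>k<K. dot d (col_fun X k) (col_fun X k) = 1"
    using X by (auto simp: stiefel_iff_orthonormal)
  define t where "t k = dot d (col_fun Q k) (col_fun X k)" for k
  define q :: "real list" where "q = map (\<lambda>k. if 0 \<le> t k then 1 else -1) [0..<K]"
  have lq: "length q = K" and sq: "set q \<subseteq> {-1,1}" unfolding q_def by auto
  have t1: "(t k)^2 \<le> 1" if k: "k < K" for k
  proof -
    have "(t k)^2 \<le> (\<Sum>j<K. (dot d (col_fun Q j) (col_fun X k))^2)"
      unfolding t_def using k by (intro member_le_sum[where f="\<lambda>j. (dot d (col_fun Q j) (col_fun X k))^2"]) auto
    moreover have "(\<Sum>j<K. (dot d (col_fun Q j) (col_fun X k))^2) \<le> 1"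
      using doubly_substochastic_overlaps[OF Q X] k by (simp add: doubly_substochastic_def)
    ultimately show ?thesis by linarith
  qed
  have "(dF K X Q)^2 \<le> (fro_norm (X - Q * diag_of K (\<lambda>k. q ! k)))^2"
    using dF_le[OF lq sq, of X Q] dF_nonneg by (intro power_mono) auto
  also have "\<dots> = (\<Sum>k<K. \<Sum>i<d. (X $$ (i,k) - Q $$ (i,k) * q ! k)^2)"
    by (rule fro_norm_minus_signs_power2[OF XC QC])
  also have "\<dots> \<le> (\<Sum>k<K. 2 * (1 - (t k)^2))"
  proof (intro sum_mono)
    fix k assume k: "k \<in> {..<K}"
    then show "(\<Sum>i<d. (X $$ (i,k) - Q $$ (i,k) * q ! k)^2) \<le> 2 * (1 - (t k)^2)"
      using sum_power2_diff_signed_le[of d "col_fun X k" "col_fun Q k"] Xo Qo t1[of k]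
      unfolding q_def t_def col_fun_def by simp
  qed
  finally show ?thesis unfolding t_def by (simp add: sum_distrib_left)
qed

lemma gfun_quadratic_growth:
  assumes Q: "Q \<in> stiefel d K" and X: "X \<in> stiefel d K"
    and lam_dec: "\<forall>i j. i < j \<and> j < K \<longrightarrow> lam j < lam i" and lam_pos: "\<forall>k<K. 0 < lam k"
    and a_dec: "\<forall>i j. i < j \<and> j < K \<longrightarrow> acoef L nl lam v j < acoef L nl lam v i"
    and a_pos: "\<forall>k<K. 0 < acoef L nl lam v k" and K: "0 < K"
  shows "min_gap_product K (acoef L nl lam v) lam / 4 * (dF K X Q)^2
    \<le> gfun K L nl Q lam v Q - gfun K L nl Q lam v X"
proof -
  let ?\<mu> = "min_gap_product K (acoef L nl lam v) lam"
  have "?\<mu> / 4 * (dF K X Q)^2 \<le> ?\<mu> / 4 * (2 * (\<Sum>k<K. 1 - (dot d (col_fun Q k) (col_fun X k))^2))"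
    using dF_power2_le[OF Q X] min_gap_product_pos[OF a_dec a_pos lam_dec lam_pos K]
    by (intro mult_left_mono) auto
  also have "\<dots> = ?\<mu> / 2 * (\<Sum>k<K. 1 - (dot d (col_fun Q k) (col_fun X k))^2)"
    by simp
  also have "\<dots> \<le> gfun K L nl Q lam v Q - gfun K L nl Q lam v X"
    unfolding gfun_gap_eq[OF Q X]
    by (rule weighted_defect_lower_bound[OF a_dec a_pos lam_dec lam_pos K
          doubly_substochastic_overlaps[OF Q X]])
  finally show ?thesis .
qed

lemma gfun_gap_le_lipschitz_dF:
  assumes Q: "Q \<in> stiefel d K" and X: "X \<in> stiefel d K"
    and lip: "\<forall>A \<in> stiefel d K. \<forall>B \<in> stiefel d K.
                \<bar>gfun K L nl Q lam v A - gfun K L nl Q lam v B\<bar> \<le> Lg * fro_norm (A - B)"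
  shows "gfun K L nl Q lam v Q - gfun K L nl Q lam v X \<le> Lg * dF K X Q"
proof -
  obtain q where lq: "length q = K" and sq: "set q \<subseteq> {-1, 1}"
    and e: "dF K X Q = fro_norm (X - Q * diag_of K (\<lambda>k. q ! k))" using dF_attained by blast
  define QD where "QD = Q * diag_of K (\<lambda>k. q ! k)"
  have st: "QD \<in> stiefel d K" and gq: "gfun K L nl Q lam v QD = gfun K L nl Q lam v Q"
    unfolding QD_def using stiefel_mult_signs[OF Q lq sq] gfun_mult_signs[OF Q lq sq] by auto
  have "gfun K L nl Q lam v Q - gfun K L nl Q lam v X \<le> \<bar>gfun K L nl Q lam v QD - gfun K L nl Q lam v X\<bar>"
    using gq by simp
  also have "\<dots> \<le> Lg * fro_norm (QD - X)" using lip st X by blast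
  also have "fro_norm (QD - X) = dF K X Q" unfolding e QD_def
    using st X by (intro fro_norm_minus_commute) (auto simp: stiefel_def QD_def)
  finally show ?thesis .
qed

section \<open>Projected ascent on the empirical objective\<close>

lemma Mk_carrier: "Mk d L nl lam v y k \<in> carrier_mat d d" by (simp add: Mk_def)

lemma Mk_symmetric: "\<forall>p<d. \<forall>q<d. Mk d L nl lam v y k $$ (p,q) = Mk d L nl lam v y k $$ (q,p)"
  by (simp add: Mk_def mult_ac)

lemma Deltak_carrier: "Q \<in> carrier_mat d K \<Longrightarrow> Deltak d K L nl Q lam v y k \<in> carrier_mat d d"
  unfolding Deltak_def using Mk_carrier sigQ_carrier by (metis minus_carrier_mat smult_carrier_mat)

lemma Deltak_index:
  assumes "Q \<in> carrier_mat d K"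
  shows "\<forall>p<d. \<forall>q<d. Deltak d K L nl Q lam v y k $$ (p,q)
     = Mk d L nl lam v y k $$ (p,q) - acoef L nl lam v k * sigQ K Q lam $$ (p,q)"
  unfolding Deltak_def using carrier_matD[OF sigQ_carrier[OF assms, of lam]] by simp

lemma bilin_Mk_split:
  assumes "Q \<in> carrier_mat d K"
  shows "bilin d (Mk d L nl lam v y k) u w
     = acoef L nl lam v k * bilin d (sigQ K Q lam) u w + bilin d (Deltak d K L nl Q lam v y k) u w"
  using bilin_diff_smult[OF Deltak_index[OF assms], where u=u and w=w] by simp

definition emp_objective :: "nat \<Rightarrow> nat \<Rightarrow> (nat \<Rightarrow> real mat) \<Rightarrow> real mat \<Rightarrow> real" where
  "emp_objective d K M X = (\<Sum>k<K. bilin d (M k) (col_fun X k) (col_fun X k))"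

lemma abs_emp_objective_minus_gfun_le:
  assumes Q: "Q \<in> carrier_mat d K" and X: "X \<in> stiefel d K"
  shows "\<bar>emp_objective d K (Mk d L nl lam v y) X - gfun K L nl Q lam v X\<bar>
     \<le> (\<Sum>k<K. op_norm (Deltak d K L nl Q lam v y k))"
proof -
  have XC: "X \<in> carrier_mat d K" and Xo: "\<forall>k<K. dot d (col_fun X k) (col_fun X k) = 1"
    using X by (auto simp: stiefel_iff_orthonormal)
  have "emp_objective d K (Mk d L nl lam v y) X - gfun K L nl Q lam v X
      = (\<Sum>k<K. bilin d (Deltak d K L nl Q lam v y k) (col_fun X k) (col_fun X k))"
    unfolding emp_objective_def gfun_eq_sum_bilin[OF Q XC] by (simp add: bilin_Mk_split[OF Q] sum_subtractf sum.distrib)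
  also have "\<bar>\<dots>\<bar> \<le> (\<Sum>k<K. \<bar>bilin d (Deltak d K L nl Q lam v y k) (col_fun X k) (col_fun X k)\<bar>)"
    by (rule sum_abs)
  also have "\<dots> \<le> (\<Sum>k<K. op_norm (Deltak d K L nl Q lam v y k))"
  proof (intro sum_mono)
    fix k assume k: "k \<in> {..<K}"
    show "\<bar>bilin d (Deltak d K L nl Q lam v y k) (col_fun X k) (col_fun X k)\<bar> \<le> op_norm (Deltak d K L nl Q lam v y k)"
      using abs_bilin_self_le_op_norm[OF Deltak_carrier[OF Q], where w="col_fun X k"] Xo k by simp
  qed
  finally show ?thesis .
qed

lemma fro_norm_minus_stiefel_power2:
  assumes Y: "Y \<in> carrier_mat d K" and Z: "Z \<in> stiefel d K"
  shows "(fro_norm (Y - Z))^2 = (\<Sum>k<K. \<Sum>i<d. (Y $$ (i,k))^2)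
            - 2 * (\<Sum>k<K. dot d (col_fun Y k) (col_fun Z k)) + real K"
proof -
  have ZC: "Z \<in> carrier_mat d K" and Zo: "\<forall>k<K. dot d (col_fun Z k) (col_fun Z k) = 1"
    using Z by (auto simp: stiefel_iff_orthonormal)
  have "(fro_norm (Y - Z))^2 = (\<Sum>i<d. \<Sum>k<K. (Y $$ (i,k) - Z $$ (i,k))^2)"
    unfolding fro_norm_def using Y ZC by (simp add: sum_nonneg)
  also have "\<dots> = (\<Sum>k<K. \<Sum>i<d. (Y $$ (i,k) - Z $$ (i,k))^2)" by (rule sum.swap)
  also have "\<dots> = (\<Sum>k<K. (\<Sum>i<d. (Y $$ (i,k))^2) - 2 * dot d (col_fun Y k) (col_fun Z k) + dot d (col_fun Z k) (col_fun Z k))"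
    unfolding dot_def col_fun_def
    by (intro sum.cong refl) (rule sum_power2_diff)
  also have "\<dots> = (\<Sum>k<K. (\<Sum>i<d. (Y $$ (i,k))^2) - 2 * dot d (col_fun Y k) (col_fun Z k) + 1)"
    using Zo by (intro sum.cong refl) auto
  also have "\<dots> = (\<Sum>k<K. \<Sum>i<d. (Y $$ (i,k))^2) - 2 * (\<Sum>k<K. dot d (col_fun Y k) (col_fun Z k)) + real K"
    by (simp add: sum.distrib sum_subtractf sum_distrib_left)
  finally show ?thesis .
qed

lemma proj_St_correlation_ge:
  assumes Y: "Y \<in> carrier_mat d K" and X: "X \<in> stiefel d K" and X': "X' \<in> proj_St d K Y"
  shows "(\<Sum>k<K. dot d (col_fun Y k) (col_fun X k)) \<le> (\<Sum>k<K. dot d (col_fun Y k) (col_fun X' k))"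
proof -
  have X's: "X' \<in> stiefel d K" and le: "fro_norm (Y - X') \<le> fro_norm (Y - X)"
    using X' X unfolding proj_St_def by auto
  have "(fro_norm (Y - X'))^2 \<le> (fro_norm (Y - X))^2" using le fro_norm_nonneg by (intro power_mono) auto
  then show ?thesis unfolding fro_norm_minus_stiefel_power2[OF Y X] fro_norm_minus_stiefel_power2[OF Y X's] by simp
qed

lemma colmap_carrier: "colmap d K M X \<in> carrier_mat d K" by (simp add: colmap_def)

lemma colmap_index:
  assumes X: "X \<in> carrier_mat d K" and M: "\<forall>k. M k \<in> carrier_mat d d" and i: "i < d" and k: "k < K"
  shows "colmap d K M X $$ (i,k) = mat_app d (M k) (col_fun X k) i"
proof -
  have d1: "dim_row (M k) = d" "dim_col (M k) = d" using M by auto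
  have d2: "dim_row X = d" "dim_col X = K" using X by auto
  have "colmap d K M X $$ (i,k) = row (M k) i \<bullet> col X k"
    unfolding colmap_def using i k d1 by simp
  also have "\<dots> = (\<Sum>q<d. M k $$ (i,q) * X $$ (q,k))"
    unfolding scalar_prod_def using d1 d2 i k by (simp add: atLeast0LessThan)
  finally show ?thesis unfolding mat_app_def col_fun_def .
qed

lemma dot_diff_unit_vectors:
  assumes "dot d x x = 1" and "dot d x' x' = 1"
  shows "dot d x (\<lambda>i. x' i - x i) = - dot d (\<lambda>i. x' i - x i) (\<lambda>i. x' i - x i) / 2"
proof -
  have "dot d (\<lambda>i. x' i - x i) (\<lambda>i. x' i - x i) = dot d x' x' - 2 * dot d x x' + dot d x x"
    unfolding dot_def by (simp add: power2_diff sum.distrib sum_subtractf sum_distrib_left algebra_simps)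
  moreover have "dot d x (\<lambda>i. x' i - x i) = dot d x x' - dot d x x"
    unfolding dot_def by (simp add: right_diff_distrib sum_subtractf)
  ultimately show ?thesis using assms by simp
qed

text \<open>Optimality of the projection \<open>X'\<close> tested against the feasible point \<open>X\<close>; unit columns turn
  \<open>\<langle>x\<^sub>k, x'\<^sub>k - x\<^sub>k\<rangle>\<close> into \<open>-\<parallel>x'\<^sub>k - x\<^sub>k\<parallel>\<^sup>2/2\<close>.\<close>
lemma proj_St_step_correlation:
  assumes X: "X \<in> stiefel d K" and M: "\<forall>k. M k \<in> carrier_mat d d"
    and X': "X' \<in> proj_St d K (\<alpha> \<cdot>\<^sub>m X + colmap d K M X)"
  defines "w \<equiv> \<lambda>k i. col_fun X' k i - col_fun X k i"
  shows "\<alpha> / 2 * (\<Sum>k<K. dot d (w k) (w k)) \<le> (\<Sum>k<K. bilin d (M k) (w k) (col_fun X k))"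
proof -
  define Y where "Y = \<alpha> \<cdot>\<^sub>m X + colmap d K M X"
  have XC: "X \<in> carrier_mat d K" and Xo: "\<forall>k<K. dot d (col_fun X k) (col_fun X k) = 1"
    using X by (auto simp: stiefel_iff_orthonormal)
  have X'o: "\<forall>k<K. dot d (col_fun X' k) (col_fun X' k) = 1"
    using X' by (auto simp: proj_St_def stiefel_iff_orthonormal)
  have YC: "Y \<in> carrier_mat d K" unfolding Y_def using XC colmap_carrier by auto
  have Y_index: "col_fun Y k i = \<alpha> * col_fun X k i + mat_app d (M k) (col_fun X k) i"
    if "i < d" "k < K" for i k
    unfolding Y_def col_fun_def using that XC colmap_index[OF XC M that] colmap_carrier[of d K M X]
    by (simp add: col_fun_def)
  have dot_Y: "dot d (col_fun Y k) z = \<alpha> * dot d (col_fun X k) z + bilin d (M k) z (col_fun X k)"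
    if "k < K" for k z
  proof -
    have "dot d (col_fun Y k) z = (\<Sum>i<d. (\<alpha> * col_fun X k i + mat_app d (M k) (col_fun X k) i) * z i)"
      unfolding dot_def using that by (intro sum.cong refl) (simp add: Y_index)
    then show ?thesis
      unfolding dot_def bilin_def mat_app_def
      by (simp add: distrib_left distrib_right sum.distrib sum_distrib_left sum_distrib_right mult_ac)
  qed
  have "0 \<le> (\<Sum>k<K. dot d (col_fun Y k) (col_fun X' k)) - (\<Sum>k<K. dot d (col_fun Y k) (col_fun X k))"
    using proj_St_correlation_ge[OF YC X] X' unfolding Y_def by simp
  also have "\<dots> = (\<Sum>k<K. dot d (col_fun Y k) (w k))"
    unfolding w_def dot_def by (simp add: right_diff_distrib sum_subtractf)
  also have "\<dots> = (\<Sum>k<K. - \<alpha> / 2 * dot d (w k) (w k) + bilin d (M k) (w k) (col_fun X k))"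
    unfolding w_def using Xo X'o by (intro sum.cong refl) (simp add: dot_Y dot_diff_unit_vectors)
  finally show ?thesis
    by (simp add: sum_subtractf sum_distrib_left sum_divide_distrib)
qed

lemma bilin_Mk_self_lower_bound:
  assumes Q: "Q \<in> carrier_mat d K" and "\<forall>j<K. 0 \<le> lam j" and "0 \<le> acoef L nl lam v k"
  shows "- op_norm (Deltak d K L nl Q lam v y k) * dot d w w \<le> bilin d (Mk d L nl lam v y k) w w"
proof -
  have "0 \<le> bilin d (sigQ K Q lam) w w"
    unfolding bilin_sigQ_self[OF Q] using assms by (intro sum_nonneg) auto
  then have "0 \<le> acoef L nl lam v k * bilin d (sigQ K Q lam) w w"
    using assms by simp
  moreover have "\<bar>bilin d (Deltak d K L nl Q lam v y k) w w\<bar> \<le> op_norm (Deltak d K L nl Q lam v y k) * dot d w w"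
    by (rule abs_bilin_self_le_op_norm[OF Deltak_carrier[OF Q]])
  ultimately show ?thesis unfolding bilin_Mk_split[OF Q] by linarith
qed

lemma emp_objective_proj_step_mono:
  assumes Q: "Q \<in> carrier_mat d K" and X: "X \<in> stiefel d K"
    and X': "X' \<in> proj_St d K (\<alpha> \<cdot>\<^sub>m X + colmap d K (Mk d L nl lam v y) X)"
    and noise: "(\<Sum>k<K. op_norm (Deltak d K L nl Q lam v y k)) \<le> \<alpha>"
    and lam: "\<forall>j<K. 0 \<le> lam j" and a: "\<forall>k<K. 0 \<le> acoef L nl lam v k"
  shows "emp_objective d K (Mk d L nl lam v y) X \<le> emp_objective d K (Mk d L nl lam v y) X'"
proof -
  define M where "M = Mk d L nl lam v y"
  define \<epsilon> where "\<epsilon> = (\<Sum>k<K. op_norm (Deltak d K L nl Q lam v y k))"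
  define w where "w k = (\<lambda>i. col_fun X' k i - col_fun X k i)" for k
  define W where "W = (\<Sum>k<K. dot d (w k) (w k))"
  have W: "0 \<le> W" unfolding W_def dot_def by (intro sum_nonneg) auto
  have MC: "\<forall>k. M k \<in> carrier_mat d d" unfolding M_def by (simp add: Mk_carrier)
  have lin: "\<alpha> / 2 * W \<le> (\<Sum>k<K. bilin d (M k) (w k) (col_fun X k))"
    using proj_St_step_correlation[OF X MC] X' unfolding W_def w_def M_def by simp
  have quad: "- \<epsilon> * W \<le> (\<Sum>k<K. bilin d (M k) (w k) (w k))"
  proof -
    have "- \<epsilon> * W = (\<Sum>k<K. - \<epsilon> * dot d (w k) (w k))" unfolding W_def by (simp add: sum_distrib_left)
    also have "\<dots> \<le> (\<Sum>k<K. - op_norm (Deltak d K L nl Q lam v y k) * dot d (w k) (w k))"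
    proof (intro sum_mono mult_right_mono)
      fix k assume "k \<in> {..<K}"
      then have "op_norm (Deltak d K L nl Q lam v y k) \<le> \<epsilon>"
        unfolding \<epsilon>_def using op_norm_nonneg[OF Deltak_carrier[OF Q]] by (intro member_le_sum) auto
      then show "- \<epsilon> \<le> - op_norm (Deltak d K L nl Q lam v y k)" by simp
      show "0 \<le> dot d (w k) (w k)" unfolding dot_def by (intro sum_nonneg) auto
    qed
    also have "\<dots> \<le> (\<Sum>k<K. bilin d (M k) (w k) (w k))"
      unfolding M_def using bilin_Mk_self_lower_bound[OF Q lam] a by (intro sum_mono) auto
    finally show ?thesis .
  qed
  have "emp_objective d K M X' - emp_objective d K M X
      = 2 * (\<Sum>k<K. bilin d (M k) (w k) (col_fun X k)) + (\<Sum>k<K. bilin d (M k) (w k) (w k))"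
    unfolding emp_objective_def w_def M_def
    by (simp add: sum_subtractf[symmetric] bilin_self_diff[OF Mk_symmetric] sum.distrib sum_distrib_left)
  also have "\<dots> \<ge> (\<alpha> - \<epsilon>) * W" using lin quad by (simp add: left_diff_distrib)
  moreover have "0 \<le> (\<alpha> - \<epsilon>) * W" using noise W unfolding \<epsilon>_def by simp
  ultimately show ?thesis unfolding M_def by linarith
qed

section \<open>Localization of the iterates\<close>

lemma stiefel_iterates:
  assumes "X 0 \<in> stiefel d K" and "\<forall>t. X (Suc t) \<in> proj_St d K (F (X t))"
  shows "X t \<in> stiefel d K"
  using assms by (induction t) (auto simp: proj_St_def)

lemma gfun_gap_iterates_le:
  assumes Q: "Q \<in> carrier_mat d K" and X0: "X 0 \<in> stiefel d K"
    and iter: "\<forall>t. X (Suc t) \<in> proj_St d K (\<alpha> \<cdot>\<^sub>m X t + colmap d K (Mk d L nl lam v y) (X t))"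
    and noise: "(\<Sum>k<K. op_norm (Deltak d K L nl Q lam v y k)) \<le> \<alpha>"
    and lam: "\<forall>j<K. 0 \<le> lam j" and a: "\<forall>k<K. 0 \<le> acoef L nl lam v k"
  shows "gfun K L nl Q lam v Q - gfun K L nl Q lam v (X t)
    \<le> gfun K L nl Q lam v Q - gfun K L nl Q lam v (X 0) + 2 * (\<Sum>k<K. op_norm (Deltak d K L nl Q lam v y k))"
proof -
  let ?f = "emp_objective d K (Mk d L nl lam v y)"
  have St: "X t \<in> stiefel d K" for t by (rule stiefel_iterates[OF X0 iter])
  have "?f (X 0) \<le> ?f (X t)"
  proof (induction t)
    case (Suc t)
    then show ?case
      using emp_objective_proj_step_mono[OF Q St iter[rule_format] noise lam a] by (meson order_trans)
  qed simp
  then show ?thesis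
    using abs_emp_objective_minus_gfun_le[OF Q X0, where L=L and nl=nl and lam=lam and v=v and y=y]
      abs_emp_objective_minus_gfun_le[OF Q St[of t], where L=L and nl=nl and lam=lam and v=v and y=y]
    by (simp add: abs_le_iff)
qed

lemma noise_bound_of_large_lipschitz:
  fixes \<epsilon> \<eta> \<delta> c s Lg :: real
  assumes "0 < \<eta>" and "0 < \<delta>" and Lg: "2 * \<eta> * \<delta> < Lg" and "0 \<le> c" and "0 < s"
    and \<epsilon>: "\<epsilon> \<le> 2 * c * s * (\<delta>^2 * \<eta>) / (2 * Lg + s * (\<delta>^2 * \<eta>))"
  shows "\<epsilon> \<le> c * s * \<delta> / 2"
proof -
  have pos: "0 < 2 * \<eta> * \<delta>" "0 \<le> 2 * c * s * (\<delta>^2 * \<eta>)" "0 < s * (\<delta>^2 * \<eta>)"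
    using assms by auto
  then have den: "0 < 2 * Lg + s * (\<delta>^2 * \<eta>)" using Lg by linarith
  note \<epsilon>
  also have "2 * c * s * (\<delta>^2 * \<eta>) / (2 * Lg + s * (\<delta>^2 * \<eta>))
      \<le> 2 * c * s * (\<delta>^2 * \<eta>) / (2 * (2 * \<eta> * \<delta>))"
    using pos Lg den assms(1,2) by (intro divide_left_mono mult_pos_pos) auto
  also have "\<dots> = c * s * \<delta> / 2"
    using assms by (simp add: field_simps power2_eq_square)
  finally show ?thesis .
qed

lemma iterates_stay_close:
  assumes Q: "Q \<in> stiefel d K" and lam: "\<forall>j<K. 0 \<le> lam j" and a: "\<forall>k<K. 0 \<le> acoef L nl lam v k"
    and growth: "\<forall>X\<in>stiefel d K. 2 * \<eta> * (dF K X Q)^2 \<le> gfun K L nl Q lam v Q - gfun K L nl Q lam v X"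
    and \<eta>: "0 < \<eta>" and \<delta>: "0 < \<delta>" and c: "0 \<le> c" and s: "0 < s"
    and s_\<alpha>: "c * s * \<delta> \<le> 2 * \<alpha>" and s_\<eta>: "c * s \<le> \<delta> * \<eta>"
    and lip: "\<forall>A \<in> stiefel d K. \<forall>B \<in> stiefel d K.
      \<bar>gfun K L nl Q lam v A - gfun K L nl Q lam v B\<bar> \<le> Lg * fro_norm (A - B)"
    and X0: "X 0 \<in> stiefel d K" and init: "gfun K L nl Q lam v Q - gfun K L nl Q lam v (X 0) \<le> \<delta>^2 * \<eta>"
    and noise: "(\<Sum>k<K. op_norm (Deltak d K L nl Q lam v y k))
      \<le> 2 * c * s * (\<delta>^2 * \<eta>) / (2 * Lg + s * (\<delta>^2 * \<eta>))"
    and iter: "\<forall>t. X (Suc t) \<in> proj_St d K (\<alpha> \<cdot>\<^sub>m X t + colmap d K (Mk d L nl lam v y) (X t))"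
  shows "dF K (X t) Q \<le> \<delta>"
proof (rule ccontr)
  let ?\<epsilon> = "\<Sum>k<K. op_norm (Deltak d K L nl Q lam v y k)"
  let ?G = "gfun K L nl Q lam v Q - gfun K L nl Q lam v (X t)"
  assume "\<not> dF K (X t) Q \<le> \<delta>"
  then have far: "\<delta> < dF K (X t) Q" by simp
  have St: "X t \<in> stiefel d K" by (rule stiefel_iterates[OF X0 iter])
  have QC: "Q \<in> carrier_mat d K" using Q by (simp add: stiefel_def)
  have "2 * \<eta> * (dF K (X t) Q)^2 \<le> Lg * dF K (X t) Q"
    using bspec[OF growth St] gfun_gap_le_lipschitz_dF[OF Q St lip] by (rule order_trans)
  then have "(2 * \<eta> * dF K (X t) Q) * dF K (X t) Q \<le> Lg * dF K (X t) Q"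
    by (simp add: power2_eq_square mult.assoc)
  then have "2 * \<eta> * dF K (X t) Q \<le> Lg"
    by (rule mult_right_le_imp_le) (use far \<delta> in simp)
  moreover have "2 * \<eta> * \<delta> < 2 * \<eta> * dF K (X t) Q" using far \<eta> by simp
  ultimately have "?\<epsilon> \<le> c * s * \<delta> / 2"
    using noise_bound_of_large_lipschitz[OF \<eta> \<delta> _ c s noise] by linarith
  moreover have "c * s * \<delta> \<le> \<delta> * \<eta> * \<delta>" using mult_right_mono[OF s_\<eta>] \<delta> by simp
  moreover have "\<delta> * \<eta> * \<delta> = \<delta>^2 * \<eta>" and "\<delta>^2 * \<eta> = \<eta> * \<delta>^2"
    by (simp_all add: power2_eq_square)
  ultimately have "?\<epsilon> \<le> \<alpha>" and "?\<epsilon> \<le> \<eta> * \<delta>^2 / 2"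
    using s_\<alpha> by linarith+
  then have "?G \<le> 2 * \<eta> * \<delta>^2"
    using init gfun_gap_iterates_le[OF QC X0 iter _ lam a, of t] \<open>\<delta>^2 * \<eta> = \<eta> * \<delta>^2\<close> by linarith
  then have "2 * \<eta> * (dF K (X t) Q)^2 \<le> 2 * \<eta> * \<delta>^2"
    using bspec[OF growth St] by (rule order_trans[rotated])
  then have "(dF K (X t) Q)^2 \<le> \<delta>^2" by (rule mult_left_le_imp_le) (use \<eta> in simp)
  then have "dF K (X t) Q \<le> \<delta>" using \<delta> by (rule power2_le_imp_le[OF _ less_imp_le])
  with far show False by simp
qed

lemma exists_gamma_iterates_stay_close:
  assumes Q: "Q \<in> stiefel d K" and lam: "\<forall>j<K. 0 \<le> lam j" and a: "\<forall>k<K. 0 \<le> acoef L nl lam v k"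
    and growth: "\<forall>X\<in>stiefel d K. 2 * \<eta> * (dF K X Q)^2 \<le> gfun K L nl Q lam v Q - gfun K L nl Q lam v X"
    and \<eta>: "0 < \<eta>" and \<delta>: "0 < \<delta>" and \<alpha>: "0 < \<alpha> \<and> \<alpha> < A"
  shows "\<exists>\<gamma>. 0 < \<gamma> \<and> \<gamma> < 1 \<and>
    (\<forall>(y :: nat \<Rightarrow> nat \<Rightarrow> real vec) (Lg :: real) (X :: nat \<Rightarrow> real mat).
       let \<delta>1 = \<delta>^2 * \<eta>; c = A - \<alpha>
       in ((\<forall>l<L. \<forall>i<nl l. y l i \<in> carrier_vec d)
           \<and> 0 < Lg
           \<and> (\<forall>A \<in> stiefel d K. \<forall>B \<in> stiefel d K.
                \<bar>gfun K L nl Q lam v A - gfun K L nl Q lam v B\<bar> \<le> Lg * fro_norm (A - B))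
           \<and> X 0 \<in> stiefel d K
           \<and> gfun K L nl Q lam v Q - gfun K L nl Q lam v (X 0) \<le> \<delta>1
           \<and> (\<Sum>k<K. op_norm (Deltak d K L nl Q lam v y k))
                \<le> 2 * c * (1 - \<gamma>) * \<delta>1 / (2 * Lg + (1 - \<gamma>) * \<delta>1)
           \<and> (\<forall>t. X (Suc t) \<in> proj_St d K (\<alpha> \<cdot>\<^sub>m X t + colmap d K (Mk d L nl lam v y) (X t))))
          \<longrightarrow> (\<forall>t. dF K (X t) Q \<le> \<delta>))"
proof -
  define c where "c = A - \<alpha>"
  have c: "0 < c" using \<alpha> by (simp add: c_def)
  define s where "s = min (1/2) (min (2 * \<alpha> / (c * \<delta>)) (\<delta> * \<eta> / c))"
  have s: "0 < s" "s < 1" using \<alpha> c \<delta> \<eta> by (auto simp: s_def)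
  have "s \<le> 2 * \<alpha> / (c * \<delta>)" unfolding s_def by (intro min.coboundedI2 min.cobounded1)
  then have s_\<alpha>: "c * s * \<delta> \<le> 2 * \<alpha>"
    using c \<delta> by (simp add: pos_le_divide_eq mult_ac)
  have "s \<le> \<delta> * \<eta> / c" unfolding s_def by (intro min.coboundedI2 min.cobounded2)
  then have s_\<eta>: "c * s \<le> \<delta> * \<eta>"
    using c by (simp add: pos_le_divide_eq mult_ac)
  show ?thesis
    unfolding Let_def c_def[symmetric]
  proof (intro exI[of _ "1 - s"] conjI allI impI)
    fix y Lg X t
    assume "(\<forall>l<L. \<forall>i<nl l. y l i \<in> carrier_vec d) \<and> 0 < Lg
      \<and> (\<forall>A \<in> stiefel d K. \<forall>B \<in> stiefel d K.
           \<bar>gfun K L nl Q lam v A - gfun K L nl Q lam v B\<bar> \<le> Lg * fro_norm (A - B))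
      \<and> X 0 \<in> stiefel d K \<and> gfun K L nl Q lam v Q - gfun K L nl Q lam v (X 0) \<le> \<delta>^2 * \<eta>
      \<and> (\<Sum>k<K. op_norm (Deltak d K L nl Q lam v y k))
           \<le> 2 * c * (1 - (1 - s)) * (\<delta>^2 * \<eta>) / (2 * Lg + (1 - (1 - s)) * (\<delta>^2 * \<eta>))
      \<and> (\<forall>t. X (Suc t) \<in> proj_St d K (\<alpha> \<cdot>\<^sub>m X t + colmap d K (Mk d L nl lam v y) (X t)))"
    then show "dF K (X t) Q \<le> \<delta>"
      by (elim conjE) (rule iterates_stay_close[OF Q lam a growth \<eta> \<delta> less_imp_le[OF c] s(1) s_\<alpha> s_\<eta>]; simp)
  qed (use s in auto)
qed

lemma exists_small_radius:
  fixes A B :: real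
  assumes "0 < A" and "0 < B"
  shows "\<exists>\<delta>. 0 < \<delta> \<and> \<delta> < sqrt 2 / 2 \<and> 0 < A - B * \<delta>"
proof (intro exI conjI)
  let ?\<delta> = "min (1/2) (A / (2 * B))"
  show "0 < ?\<delta>" using assms by simp
  have "(1::real) / 2 < sqrt 2 / 2" by (simp add: real_less_rsqrt)
  then show "?\<delta> < sqrt 2 / 2" by linarith
  have "?\<delta> \<le> A / (2 * B)" by (rule min.cobounded2)
  then have "B * ?\<delta> \<le> B * (A / (2 * B))" using assms by (intro mult_left_mono) auto
  then have "B * ?\<delta> \<le> A / 2" using assms by simp
  then show "0 < A - B * ?\<delta>" using assms by simp
qed

theorem proposition2:
  fixes d K L :: nat and Q :: "real mat" and lam v :: "nat \<Rightarrow> real" and nl :: "nat \<Rightarrow> nat"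
  assumes "1 \<le> K" and "K < d" and "Q \<in> stiefel d K"
    and "\<forall>i j. i < j \<and> j < K \<longrightarrow> lam j < lam i" and "\<forall>k<K. 0 < lam k"
    and "1 \<le> L" and "\<forall>l<L. 1 \<le> nl l"
    and "\<forall>i j. i < j \<and> j < L \<longrightarrow> v j < v i" and "\<forall>l<L. 0 < v l"
  shows "\<exists>\<delta> \<eta>bar. 0 < \<delta> \<and> \<delta> < sqrt 2 / 2
      \<and> lam (K-1) * acoef L nl lam v (K-1) - lam 0 * acoef L nl lam v 0 * \<delta> > 0
      \<and> 0 < \<eta>bar
      \<and> (\<forall>X \<in> stiefel d K. gfun K L nl Q lam v Q - gfun K L nl Q lam v X \<ge> \<eta>bar * (dF K X Q)^2)
      \<and> (\<forall>\<alpha>. 0 < \<alpha> \<and> \<alpha> < lam (K-1) * acoef L nl lam v (K-1) - lam 0 * acoef L nl lam v 0 * \<delta> \<longrightarrow>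
          (\<exists>\<gamma>. 0 < \<gamma> \<and> \<gamma> < 1 \<and>
            (\<forall>(y :: nat \<Rightarrow> nat \<Rightarrow> real vec) (Lg :: real) (X :: nat \<Rightarrow> real mat).
               let \<delta>1 = \<delta>^2 * \<eta>bar;
                   c = lam (K-1) * acoef L nl lam v (K-1) - lam 0 * acoef L nl lam v 0 * \<delta> - \<alpha>
               in ((\<forall>l<L. \<forall>i<nl l. y l i \<in> carrier_vec d)
                   \<and> 0 < Lg
                   \<and> (\<forall>A \<in> stiefel d K. \<forall>B \<in> stiefel d K.
                        \<bar>gfun K L nl Q lam v A - gfun K L nl Q lam v B\<bar> \<le> Lg * fro_norm (A - B))
                   \<and> X 0 \<in> stiefel d K
                   \<and> gfun K L nl Q lam v Q - gfun K L nl Q lam v (X 0) \<le> \<delta>1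
                   \<and> (\<Sum>k<K. op_norm (Deltak d K L nl Q lam v y k))
                        \<le> 2 * c * (1 - \<gamma>) * \<delta>1 / (2 * Lg + (1 - \<gamma>) * \<delta>1)
                   \<and> (\<forall>t. X (Suc t) \<in> proj_St d K (\<alpha> \<cdot>\<^sub>m X t + colmap d K (Mk d L nl lam v y) (X t))))
                  \<longrightarrow> (\<forall>t. dF K (X t) Q \<le> \<delta>))))"
proof -
  note Q = assms(3) and lam_dec = assms(4) and lam_pos = assms(5)
  have K: "0 < K" using assms(1) by simp
  have a_dec: "\<forall>i j. i < j \<and> j < K \<longrightarrow> acoef L nl lam v j < acoef L nl lam v i"
    by (rule acoef_strict_antimono[OF assms(4-7,9)])
  have a_pos: "\<forall>k<K. 0 < acoef L nl lam v k" using acoef_pos[OF assms(5-7,9)] by blast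
  have lam_nonneg: "\<forall>j<K. 0 \<le> lam j" and a_nonneg: "\<forall>k<K. 0 \<le> acoef L nl lam v k"
    using lam_pos a_pos by (simp_all add: less_imp_le)
  define \<eta> where "\<eta> = min_gap_product K (acoef L nl lam v) lam / 8"
  have \<eta>: "0 < \<eta>" unfolding \<eta>_def using min_gap_product_pos[OF a_dec a_pos lam_dec lam_pos K] by simp
  have growth: "\<forall>X\<in>stiefel d K. 2 * \<eta> * (dF K X Q)^2 \<le> gfun K L nl Q lam v Q - gfun K L nl Q lam v X"
    using gfun_quadratic_growth[OF Q _ lam_dec lam_pos a_dec a_pos K] by (simp add: \<eta>_def)
  obtain \<delta> where \<delta>: "0 < \<delta>" "\<delta> < sqrt 2 / 2"
    "0 < lam (K-1) * acoef L nl lam v (K-1) - lam 0 * acoef L nl lam v 0 * \<delta>"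
    using exists_small_radius[of "lam (K-1) * acoef L nl lam v (K-1)" "lam 0 * acoef L nl lam v 0"]
      K lam_pos a_pos by auto
  show ?thesis
  proof (rule exI[of _ \<delta>], rule exI[of _ \<eta>], intro conjI ballI allI impI)
    show "0 < \<delta>" and "\<delta> < sqrt 2 / 2" and "0 < \<eta>"
      and "lam (K-1) * acoef L nl lam v (K-1) - lam 0 * acoef L nl lam v 0 * \<delta> > 0"
      by (fact \<delta> \<eta>)+
    show "gfun K L nl Q lam v Q - gfun K L nl Q lam v X \<ge> \<eta> * (dF K X Q)^2"
      if "X \<in> stiefel d K" for X
      using order_trans[OF mult_right_mono[of \<eta> "2 * \<eta>"] bspec[OF growth that]] \<eta> by simp
  qed (rule exists_gamma_iterates_stay_close[OF Q lam_nonneg a_nonneg growth \<eta> \<delta>(1)])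
qed

end
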